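(* Let $\Lambda_1,\Lambda_2$ be independent random real diagonal $m\times m$ matrices with finite fourth moments, let $Q_s$ be a random $\beta$-orthogonal permutation-invariant matrix, let $\Pi$ be a uniformly random permutation matrix and $Q$ a $\beta$-Haar distributed $\beta$-orthogonal matrix, with each of $Q_s,\Pi,Q$ independent of $(\Lambda_1,\Lambda_2)$. Set $$M=\Lambda_1+Q_s^{-1}\Lambda_2Q_s,\quad M_c=\Lambda_1+\Pi^{-1}\Lambda_2\Pi,\quad M_f=\Lambda_1+Q^{-1}\Lambda_2Q,$$ and $m_4=\varphi[M^4]$, $m_4^c=\varphi[M_c^4]$, $m_4^f=\varphi[M_f^4]$. Assume $\mathbb{E}[\tilde\kappa_2(\Lambda_1)\tilde\kappa_2(\Lambda_2)]\ne 0$. Then the number $p$ defined by $m_4=p\,m_4^f+(1-p)\,m_4^c$ is independent of the distributions of $\Lambda_1,\Lambda_2$ and equals $$p=\frac{m_4^c-m_4}{m_4^c-m_4^f}=\frac{1-m\,\mathbb{E}(|q_s|^4)}{1-m\,\mathbb{E}(|q|^4)},$$ where $q_s$ is any entry of $Q_s$ and $q$ is any entry of $Q$. Since $1-m\mathbb{E}(|q|^4)=\frac{(m-1)\beta}{m\beta+2}\to1$ as $m\to\infty$, $p$ is asymptotically $1-m\,\mathbb{E}(|q_s|^4)$.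
   Context: Fix integers $m\ge 2$ and $\beta\in\{1,2,4\}$. A $\beta$-orthogonal matrix is an $m\times m$ real orthogonal ($\beta=1$), complex unitary ($\beta=2$) or quaternionic unitary/symplectic ($\beta=4$) matrix; $U^{-1}=U^{*}$. A random $\beta$-orthogonal matrix $U$ is called permutation invariant if for all $m\times m$ permutation matrices $\Pi_1,\Pi_2$ the joint distribution of the entries of $\Pi_1U\Pi_2$ equals that of $U$. For a random $m\times m$ matrix $X$, $\varphi[X]:=\frac1m\mathbb{E}\,\mathrm{Tr}\,X$ (for $\beta=4$, $\mathrm{Tr}$ denotes the real part of the trace). For a diagonal matrix $\mathrm{diag}(x_1,\dots,x_m)$, $\tilde\kappa_2:=\frac1m\sum_i x_i^2-\frac{1}{m(m-1)}\sum_{i\neq j}x_ix_j$. Known fact used: for a $\beta$-Haar matrix, every entry $q$ satisfies $\mathbb{E}|q|^4=\frac{\beta+2}{m(m\beta+2)}$. *)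

theory Defs
  imports "HOL-Probability.Probability"
begin

section \<open>Quaternions encoded as real^4 (components 1,2,3,4 = real, i, j, k parts)\<close>

definition qofreal :: "real \<Rightarrow> real^4" where
  "qofreal r = (\<chi> k. if k = 1 then r else 0)"

definition qone :: "real^4" where "qone = qofreal 1"

definition qre :: "real^4 \<Rightarrow> real" where "qre x = x $ 1"

definition qconj :: "real^4 \<Rightarrow> real^4" where
  "qconj x = (\<chi> k. if k = 1 then x $ k else - (x $ k))"

definition qmul :: "real^4 \<Rightarrow> real^4 \<Rightarrow> real^4" where
  "qmul a b = vector
     [a$1*b$1 - a$2*b$2 - a$3*b$3 - a$4*b$4,
      a$1*b$2 + a$2*b$1 + a$3*b$4 - a$4*b$3,
      a$1*b$3 - a$2*b$4 + a$3*b$1 + a$4*b$2,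
      a$1*b$4 + a$2*b$3 - a$3*b$2 + a$4*b$1]"

definition qnormsq :: "real^4 \<Rightarrow> real" where
  "qnormsq x = (x$1)^2 + (x$2)^2 + (x$3)^2 + (x$4)^2"

text \<open>Entries allowed for beta = 1 (real), 2 (complex), 4 (quaternion).\<close>
definition beta_scalar :: "nat \<Rightarrow> real^4 \<Rightarrow> bool" where
  "beta_scalar \<beta> x =
     (if \<beta> = 1 then x$2 = 0 \<and> x$3 = 0 \<and> x$4 = 0
      else if \<beta> = 2 then x$3 = 0 \<and> x$4 = 0 else True)"

section \<open>Quaternionic m x m matrices, m = CARD('n)\<close>

type_synonym 'n qmat = "real^4^'n^'n"

definition qmm :: "'n::finite qmat \<Rightarrow> 'n qmat \<Rightarrow> 'n qmat" where
  "qmm A B = (\<chi> i j. \<Sum>k\<in>UNIV. qmul (A$i$k) (B$k$j))"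

definition qadj :: "'n::finite qmat \<Rightarrow> 'n qmat" where
  "qadj A = (\<chi> i j. qconj (A$j$i))"

definition qid :: "'n::finite qmat" where
  "qid = (\<chi> i j. if i = j then qone else 0)"

definition qdiag :: "real^'n::finite \<Rightarrow> 'n qmat" where
  "qdiag d = (\<chi> i j. if i = j then qofreal (d$i) else 0)"

definition qtrace :: "'n::finite qmat \<Rightarrow> real^4" where
  "qtrace A = (\<Sum>i\<in>UNIV. A$i$i)"

text \<open>beta-orthogonal: orthogonal / unitary / symplectic, U^{-1} = U^*.\<close>
definition beta_orth :: "nat \<Rightarrow> 'n::finite qmat \<Rightarrow> bool" where
  "beta_orth \<beta> U \<longleftrightarrow> (\<forall>i j. beta_scalar \<beta> (U$i$j)) \<and>
     qmm (qadj U) U = qid \<and> qmm U (qadj U) = qid"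

definition perm_qmat :: "('n::finite \<Rightarrow> 'n) \<Rightarrow> 'n qmat" where
  "perm_qmat \<sigma> = (\<chi> i j. if i = \<sigma> j then qone else 0)"

definition phi :: "'w measure \<Rightarrow> ('w \<Rightarrow> 'n::finite qmat) \<Rightarrow> real" where
  "phi M X = (1 / real CARD('n)) * (\<integral>\<omega>. qre (qtrace (X \<omega>)) \<partial>M)"

definition kappa2 :: "real^'n::finite \<Rightarrow> real" where
  "kappa2 x = (1 / real CARD('n)) * (\<Sum>i\<in>UNIV. (x$i)^2)
      - (1 / (real CARD('n) * (real CARD('n) - 1))) * (\<Sum>i\<in>UNIV. \<Sum>j\<in>UNIV - {i}. x$i * x$j)"

definition qpow4 :: "'n::finite qmat \<Rightarrow> 'n qmat" where
  "qpow4 A = qmm A (qmm A (qmm A A))"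

definition perm_invariant :: "'w measure \<Rightarrow> ('w \<Rightarrow> 'n::finite qmat) \<Rightarrow> bool" where
  "perm_invariant M U \<longleftrightarrow> (\<forall>\<sigma> \<tau>. \<sigma> permutes UNIV \<longrightarrow> \<tau> permutes UNIV \<longrightarrow>
     distr M borel (\<lambda>\<omega>. qmm (perm_qmat \<sigma>) (qmm (U \<omega>) (perm_qmat \<tau>))) = distr M borel U)"

text \<open>beta-Haar: a.s. beta-orthogonal, distribution invariant under left multiplication
  by every beta-orthogonal matrix (this characterises Haar measure on the compact group).\<close>
definition beta_haar :: "nat \<Rightarrow> 'w measure \<Rightarrow> ('w \<Rightarrow> 'n::finite qmat) \<Rightarrow> bool" where
  "beta_haar \<beta> M Q \<longleftrightarrow> Q \<in> borel_measurable M \<and> (AE \<omega> in M. beta_orth \<beta> (Q \<omega>)) \<and>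
     (\<forall>V. beta_orth \<beta> V \<longrightarrow> distr M borel (\<lambda>\<omega>. qmm V (Q \<omega>)) = distr M borel Q)"

definition unif_perm :: "'w measure \<Rightarrow> ('w \<Rightarrow> 'n::finite qmat) \<Rightarrow> bool" where
  "unif_perm M P \<longleftrightarrow> P \<in> borel_measurable M \<and>
     (\<forall>\<sigma>. \<sigma> permutes (UNIV::'n set) \<longrightarrow>
        measure M {\<omega>\<in>space M. P \<omega> = perm_qmat \<sigma>} = 1 / fact CARD('n))"

definition indep_rv :: "'w measure \<Rightarrow> ('w \<Rightarrow> 'a::topological_space) \<Rightarrow> ('w \<Rightarrow> 'b::topological_space) \<Rightarrow> bool" where
  "indep_rv M X Y \<longleftrightarrow>
     distr M (borel \<Otimes>\<^sub>M borel) (\<lambda>\<omega>. (X \<omega>, Y \<omega>)) = distr M borel X \<Otimes>\<^sub>M distr M borel Y"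

end

theory Submission
  imports Defs
begin

text \<open>Expanding \<open>tr (\<Lambda>\<^sub>1 + U\<^sup>* \<Lambda>\<^sub>2 U)\<^sup>4\<close> and using cyclicity of the real trace, every
  term is a product of eigenvalues times either \<open>|U\<^sub>k\<^sub>i|\<^sup>2\<close> or the cross term
  \<open>Re (conj U\<^sub>k\<^sub>i U\<^sub>k\<^sub>j conj U\<^sub>l\<^sub>j U\<^sub>l\<^sub>i)\<close>. For a unitary matrix whose law is invariant under
  row and column permutations, unitarity and invariance determine the expectations of all these
  weights from the single number \<open>w = E |U\<^sub>k\<^sub>i|\<^sup>4\<close>: \<open>E |U\<^sub>k\<^sub>i|\<^sup>2 = 1/m\<close>, and the expected
  cross term is affine in \<open>w\<close> with slope \<open>\<kappa>(i,j) \<kappa>(k,l)\<close>, where \<open>\<kappa>\<close> are the weights of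
  \<open>\<kappa>\<^sub>2\<close>. With independence this gives \<open>\<phi>[M\<^sup>4] = \<alpha> + 2 m w E[\<kappa>\<^sub>2(\<Lambda>\<^sub>1) \<kappa>\<^sub>2(\<Lambda>\<^sub>2)]\<close>, where
  \<open>\<alpha>\<close> does not depend on \<open>U\<close>. Permutation matrices have \<open>w = 1/m\<close>, Haar matrices
  \<open>w \<noteq> 1/m\<close>, so the three fourth moments are affine in \<open>1 - m w\<close>.\<close>

section \<open>Quaternions\<close>

lemma vector_4 [simp]:
 "(vector [x1,x2,x3,x4] ::('a::zero)^4)$1 = x1"
 "(vector [x1,x2,x3,x4] ::('a::zero)^4)$2 = x2"
 "(vector [x1,x2,x3,x4] ::('a::zero)^4)$3 = x3"
 "(vector [x1,x2,x3,x4] ::('a::zero)^4)$4 = x4"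
  unfolding vector_def by simp_all

lemma q_eq_iff: "(x::real^4) = y \<longleftrightarrow> x$1 = y$1 \<and> x$2 = y$2 \<and> x$3 = y$3 \<and> x$4 = y$4"
  by (simp add: vec_eq_iff forall_4)

lemma qofreal_nth [simp]: "qofreal r $ 1 = r" "qofreal r $ 2 = 0" "qofreal r $ 3 = 0" "qofreal r $ 4 = 0"
  by (simp_all add: qofreal_def)

lemma qconj_nth [simp]: "qconj x $ 1 = x $ 1" "qconj x $ 2 = - x $ 2" "qconj x $ 3 = - x $ 3" "qconj x $ 4 = - x $ 4"
  by (simp_all add: qconj_def)

lemma qmul_nth [simp]:
  "qmul a b $ 1 = a$1*b$1 - a$2*b$2 - a$3*b$3 - a$4*b$4"
  "qmul a b $ 2 = a$1*b$2 + a$2*b$1 + a$3*b$4 - a$4*b$3"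
  "qmul a b $ 3 = a$1*b$3 - a$2*b$4 + a$3*b$1 + a$4*b$2"
  "qmul a b $ 4 = a$1*b$4 + a$2*b$3 - a$3*b$2 + a$4*b$1"
  by (simp_all add: qmul_def)

lemma qmul_assoc: "qmul (qmul a b) c = qmul a (qmul b c)"
  by (simp add: q_eq_iff algebra_simps)

lemma qre_comm: "qre (qmul a b) = qre (qmul b a)"
  by (simp add: qre_def algebra_simps)

lemma qconj_qmul: "qconj (qmul a b) = qmul (qconj b) (qconj a)"
  by (simp add: q_eq_iff algebra_simps)

lemma qmul_add_left: "qmul (a + b) c = qmul a c + qmul b c"
  by (simp add: q_eq_iff algebra_simps)

lemma qmul_add_right: "qmul c (a + b) = qmul c a + qmul c b"
  by (simp add: q_eq_iff algebra_simps)

lemma qmul_zero_left [simp]: "qmul 0 c = 0"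
  by (simp add: q_eq_iff)

lemma qmul_zero_right [simp]: "qmul c 0 = 0"
  by (simp add: q_eq_iff)

lemma qmul_scaleR_left: "qmul (r *\<^sub>R a) b = r *\<^sub>R qmul a b"
  by (simp add: q_eq_iff algebra_simps)

lemma qmul_scaleR_right: "qmul a (r *\<^sub>R b) = r *\<^sub>R qmul a b"
  by (simp add: q_eq_iff algebra_simps)

lemma qmul_qofreal_left [simp]: "qmul (qofreal r) b = r *\<^sub>R b"
  by (simp add: q_eq_iff)

lemma qmul_qofreal_right [simp]: "qmul b (qofreal r) = r *\<^sub>R b"
  by (simp add: q_eq_iff)

lemma qmul_sum_left: "qmul (\<Sum>i\<in>S. f i) c = (\<Sum>i\<in>S. qmul (f i) c)"
  by (induction S rule: infinite_finite_induct) (auto simp: qmul_add_left)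

lemma qmul_sum_right: "qmul c (\<Sum>i\<in>S. f i) = (\<Sum>i\<in>S. qmul c (f i))"
  by (induction S rule: infinite_finite_induct) (auto simp: qmul_add_right)

lemma qconj_qconj [simp]: "qconj (qconj x) = x"
  by (simp add: q_eq_iff)

lemma qconj_add: "qconj (x + y) = qconj x + qconj y"
  by (simp add: q_eq_iff)

lemma qconj_zero [simp]: "qconj 0 = 0"
  by (simp add: q_eq_iff)

lemma qconj_qofreal [simp]: "qconj (qofreal r) = qofreal r"
  by (simp add: q_eq_iff)

lemma qconj_sum: "qconj (\<Sum>i\<in>S. f i) = (\<Sum>i\<in>S. qconj (f i))"
  by (induction S rule: infinite_finite_induct) (auto simp: qconj_add)

lemma qmul_conj_self: "qmul (qconj x) x = qofreal (qnormsq x)"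
  by (simp add: q_eq_iff qnormsq_def power2_eq_square algebra_simps)

lemma qmul_self_conj: "qmul x (qconj x) = qofreal (qnormsq x)"
  by (simp add: q_eq_iff qnormsq_def power2_eq_square algebra_simps)

lemma qre_add: "qre (x + y) = qre x + qre y"
  by (simp add: qre_def)

lemma qre_zero [simp]: "qre 0 = 0"
  by (simp add: qre_def)

lemma qre_scaleR: "qre (r *\<^sub>R x) = r * qre x"
  by (simp add: qre_def)

lemma qre_sum: "qre (\<Sum>i\<in>S. f i) = (\<Sum>i\<in>S. qre (f i))"
  by (induction S rule: infinite_finite_induct) (auto simp: qre_add)

lemma qre_qofreal [simp]: "qre (qofreal r) = r"
  by (simp add: qre_def)

lemma qnormsq_nonneg: "0 \<le> qnormsq x"
  by (simp add: qnormsq_def)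

lemma qnormsq_qconj [simp]: "qnormsq (qconj x) = qnormsq x"
  by (simp add: qnormsq_def)

lemma qone_eq: "qone = qofreal 1"
  by (simp add: qone_def)

lemma qofreal_zero [simp]: "qofreal 0 = 0"
  by (simp add: q_eq_iff)

lemma qnormsq_qofreal [simp]: "qnormsq (qofreal r) = r^2"
  by (simp add: qnormsq_def)

lemma qnormsq_zero [simp]: "qnormsq 0 = 0"
  by (simp add: qnormsq_def)

lemma qofreal_add: "qofreal (x + y) = qofreal x + qofreal y"
  by (simp add: q_eq_iff)

lemma qofreal_sum: "qofreal (\<Sum>k\<in>S. f k) = (\<Sum>k\<in>S. qofreal (f k))"
  by (induction S rule: infinite_finite_induct) (auto simp: qofreal_add)

lemma scaleR_qofreal: "r *\<^sub>R qofreal s = qofreal (r * s)"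
  by (simp add: q_eq_iff)

lemma qnormsq_scaleR: "qnormsq (r *\<^sub>R x) = r^2 * qnormsq x"
  by (simp add: qnormsq_def power2_eq_square algebra_simps)

lemma qnormsq_eq0: "qnormsq x = 0 \<longleftrightarrow> x = 0"
proof
  assume "qnormsq x = 0"
  then have "(x$1)^2 + (x$2)^2 + (x$3)^2 + (x$4)^2 = 0" by (simp add: qnormsq_def)
  then have "x$1 = 0 \<and> x$2 = 0 \<and> x$3 = 0 \<and> x$4 = 0" by (simp add: add_nonneg_eq_0_iff)
  then show "x = 0" by (simp add: q_eq_iff)
qed simp

lemma qnormsq_uminus [simp]: "qnormsq (- x) = qnormsq x"
  by (simp add: qnormsq_def)

lemma qre_normsq_same_col: "qre (qmul (qmul (qconj x) x) (qmul (qconj y) y)) = qnormsq x * qnormsq y"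
  by (simp add: qmul_conj_self qre_scaleR)

lemma qre_normsq_same_row: "qre (qmul (qmul (qconj x) y) (qmul (qconj y) x)) = qnormsq x * qnormsq y"
proof -
  have "qmul (qmul (qconj x) y) (qmul (qconj y) x) = qmul (qconj x) (qmul (qmul y (qconj y)) x)"
    by (simp add: qmul_assoc)
  also have "\<dots> = qnormsq y *\<^sub>R qmul (qconj x) x"
    by (simp add: qmul_self_conj qmul_scaleR_right)
  finally show ?thesis by (simp add: qmul_conj_self qre_scaleR)
qed

lemma qmm_nth [simp]: "qmm A B $ i $ j = (\<Sum>k\<in>UNIV. qmul (A$i$k) (B$k$j))"
  by (simp add: qmm_def)

lemma qadj_nth [simp]: "qadj A $ i $ j = qconj (A$j$i)"
  by (simp add: qadj_def)

lemma qdiag_nth [simp]: "qdiag d $ i $ j = (if i = j then qofreal (d$i) else 0)"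
  by (simp add: qdiag_def)

lemma qid_nth [simp]: "qid $ i $ j = (if i = j then qofreal 1 else 0)"
  by (simp add: qid_def qone_eq)

lemma qmm_assoc: "qmm (qmm A B) C = qmm A (qmm B C)"
proof -
  have "\<And>i j. (\<Sum>l\<in>UNIV. qmul (\<Sum>k\<in>UNIV. qmul (A$i$k) (B$k$l)) (C$l$j))
     = (\<Sum>k\<in>UNIV. qmul (A$i$k) (\<Sum>l\<in>UNIV. qmul (B$k$l) (C$l$j)))"
    by (simp add: qmul_sum_left qmul_sum_right qmul_assoc) (rule sum.swap)
  then show ?thesis by (simp add: vec_eq_iff)
qed

lemma qmm_add_left: "qmm (A + B) C = qmm A C + qmm B C"
  by (simp add: vec_eq_iff qmul_add_left sum.distrib)

lemma qmm_add_right: "qmm C (A + B) = qmm C A + qmm C B"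
  by (simp add: vec_eq_iff qmul_add_right sum.distrib)

lemma qtrace_add: "qtrace (A + B) = qtrace A + qtrace B"
  by (simp add: qtrace_def sum.distrib)

lemma qre_qtrace_comm: "qre (qtrace (qmm A B)) = qre (qtrace (qmm B A))"
proof -
  have "(\<Sum>i\<in>UNIV. \<Sum>k\<in>UNIV. qre (qmul (A$i$k) (B$k$i))) = (\<Sum>k\<in>UNIV. \<Sum>i\<in>UNIV. qre (qmul (B$k$i) (A$i$k)))"
    by (subst sum.swap) (simp add: qre_comm)
  then show ?thesis by (simp add: qtrace_def qre_sum)
qed

lemma qadj_qmm: "qadj (qmm A B) = qmm (qadj B) (qadj A)"
  by (simp add: vec_eq_iff qconj_sum qconj_qmul)

lemma qadj_qadj [simp]: "qadj (qadj A) = A"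
  by (simp add: vec_eq_iff)

lemma qmul_if_left: "qmul (if c then x else 0) y = (if c then qmul x y else 0)"
  by simp

lemma qmul_if_right: "qmul y (if c then x else 0) = (if c then qmul y x else 0)"
  by simp

lemma qmm_qdiag_left [simp]: "qmm (qdiag d) X $ i $ j = d$i *\<^sub>R X$i$j"
  by (simp only: qmm_nth qdiag_nth qmul_if_left) simp

lemma qmm_qid_left [simp]: "qmm qid X = X"
  by (simp only: vec_eq_iff qmm_nth qid_nth qmul_if_left) simp

lemma qmm_qid_right [simp]: "qmm X qid = X"
  by (simp only: vec_eq_iff qmm_nth qid_nth qmul_if_right) simp

lemma qdiag_mult: "qmm (qdiag a) (qdiag b) = qdiag (\<chi> i. a$i * b$i)"
  by (simp only: vec_eq_iff qmm_qdiag_left) (simp add: qofreal_def vec_eq_iff)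

lemma tr_cyclic4: "qre (qtrace (qmm X (qmm Y (qmm Z W)))) = qre (qtrace (qmm Y (qmm Z (qmm W X))))"
  by (metis qmm_assoc qre_qtrace_comm)

section \<open>The trace of the fourth power\<close>

abbreviation tr :: "'n::finite qmat \<Rightarrow> real" where "tr X \<equiv> qre (qtrace X)"

abbreviation mm4 :: "'n::finite qmat \<Rightarrow> 'n qmat \<Rightarrow> 'n qmat \<Rightarrow> 'n qmat \<Rightarrow> 'n qmat"
  where "mm4 X Y Z W \<equiv> qmm X (qmm Y (qmm Z W))"

lemma tr_add: "tr (X + Y) = tr X + tr Y"
  by (simp add: qtrace_add qre_add)

lemma tr_pow4_add:
  fixes A C :: "'n::finite qmat"
  shows "tr (qpow4 (A + C)) = tr (mm4 A A A A) + 4 * tr (mm4 A A A C) + 4 * tr (mm4 A A C C)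
     + 2 * tr (mm4 A C A C) + 4 * tr (mm4 A C C C) + tr (mm4 C C C C)"
proof -
  have e: "tr (qpow4 (A + C)) =
     tr (mm4 A A A A) + tr (mm4 A A A C) + tr (mm4 A A C A) + tr (mm4 A A C C)
   + tr (mm4 A C A A) + tr (mm4 A C A C) + tr (mm4 A C C A) + tr (mm4 A C C C)
   + tr (mm4 C A A A) + tr (mm4 C A A C) + tr (mm4 C A C A) + tr (mm4 C A C C)
   + tr (mm4 C C A A) + tr (mm4 C C A C) + tr (mm4 C C C A) + tr (mm4 C C C C)"
    by (simp add: qpow4_def qmm_add_left qmm_add_right tr_add)
  have "tr (mm4 C A A A) = tr (mm4 A A A C)" by (rule tr_cyclic4)
  moreover have "tr (mm4 A C A A) = tr (mm4 A A A C)" by (metis tr_cyclic4)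
  moreover have "tr (mm4 A A C A) = tr (mm4 A A A C)" by (metis tr_cyclic4)
  moreover have "tr (mm4 A C C A) = tr (mm4 A A C C)" by (metis tr_cyclic4)
  moreover have "tr (mm4 C C A A) = tr (mm4 A A C C)" by (metis tr_cyclic4)
  moreover have "tr (mm4 C A A C) = tr (mm4 A A C C)" by (metis tr_cyclic4)
  moreover have "tr (mm4 C A C A) = tr (mm4 A C A C)" by (metis tr_cyclic4)
  moreover have "tr (mm4 C C C A) = tr (mm4 A C C C)" by (metis tr_cyclic4)
  moreover have "tr (mm4 C C A C) = tr (mm4 A C C C)" by (metis tr_cyclic4)
  moreover have "tr (mm4 C A C C) = tr (mm4 A C C C)" by (metis tr_cyclic4)
  ultimately show ?thesis using e by linarith
qed

definition cross_term :: "'n::finite qmat \<Rightarrow> 'n \<Rightarrow> 'n \<Rightarrow> 'n \<Rightarrow> 'n \<Rightarrow> real" where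
  "cross_term U i j k l = qre (qmul (qmul (qconj (U$k$i)) (U$k$j)) (qmul (qconj (U$l$j)) (U$l$i)))"

lemma conj_diag_nth: "qmm (qadj U) (qmm (qdiag e) U) $ i $ j = (\<Sum>k\<in>UNIV. e$k *\<^sub>R qmul (qconj (U$k$i)) (U$k$j))"
  by (simp only: qmm_nth[of "qadj U" "qmm (qdiag e) U"] qmm_qdiag_left qadj_nth qmul_scaleR_right)

lemma tr_diag_conj: "tr (qmm (qdiag d) (qmm (qadj U) (qmm (qdiag e) U))) =
   (\<Sum>i\<in>UNIV. \<Sum>k\<in>UNIV. d$i * e$k * qnormsq (U$k$i))"
  by (simp only: qtrace_def qmm_qdiag_left conj_diag_nth)
   (simp add: qre_sum qre_scaleR qmul_conj_self sum_distrib_left mult.assoc)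

lemma tr_qdiag: "tr (qdiag d) = (\<Sum>i\<in>UNIV. d$i)"
  by (simp add: qtrace_def qre_sum)

lemma tr_conj_diag:
  assumes UU: "qmm U (qadj U) = qid"
  shows "tr (qmm (qadj U) (qmm (qdiag d) U)) = (\<Sum>k\<in>UNIV. d$k)"
proof -
  have "tr (qmm (qadj U) (qmm (qdiag d) U)) = tr (qmm (qmm (qdiag d) U) (qadj U))"
    by (rule qre_qtrace_comm)
  also have "\<dots> = tr (qdiag d)" by (simp add: qmm_assoc UU)
  finally show ?thesis by (simp add: tr_qdiag)
qed

lemma tr_alternating: "tr (mm4 (qdiag a) (qmm (qadj U) (qmm (qdiag b) U)) (qdiag a) (qmm (qadj U) (qmm (qdiag b) U)))
  = (\<Sum>i\<in>UNIV. \<Sum>j\<in>UNIV. \<Sum>k\<in>UNIV. \<Sum>l\<in>UNIV. a$i * a$j * b$k * b$l * cross_term U i j l k)"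
  by (simp only: qtrace_def qmm_qdiag_left conj_diag_nth
      qmm_nth[of "qmm (qadj U) (qmm (qdiag b) U)" "qmm (qdiag a) (qmm (qadj U) (qmm (qdiag b) U))"])
    (simp add: cross_term_def qre_sum qre_scaleR qmul_scaleR_right qmul_scaleR_left qmul_sum_left
      qmul_sum_right sum_distrib_left qmul_assoc mult_ac)

lemma qdiag_qmm_qdiag: "qmm (qdiag x) (qmm (qdiag y) Z) = qmm (qdiag (\<chi> i. x$i * y$i)) Z"
  by (simp add: qmm_assoc[symmetric] qdiag_mult)

lemma conj_diag_mult:
  assumes UU: "qmm U (qadj U) = qid"
  shows "qmm (qmm (qadj U) (qmm (qdiag x) U)) (qmm (qadj U) (qmm (qdiag y) U))
   = qmm (qadj U) (qmm (qdiag (\<chi> i. x$i * y$i)) U)"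
proof -
  have "qmm (qmm (qadj U) (qmm (qdiag x) U)) (qmm (qadj U) (qmm (qdiag y) U))
     = qmm (qadj U) (qmm (qdiag x) (qmm (qmm U (qadj U)) (qmm (qdiag y) U)))"
    by (simp add: qmm_assoc)
  also have "\<dots> = qmm (qadj U) (qmm (qmm (qdiag x) (qdiag y)) U)"
    by (simp add: UU qmm_assoc)
  finally show ?thesis by (simp add: qdiag_mult)
qed

lemma tr_pow4_conj:
  assumes UU: "qmm U (qadj U) = qid"
  shows "tr (qpow4 (qdiag a + qmm (qadj U) (qmm (qdiag b) U))) =
    (\<Sum>i\<in>UNIV. a$i^4) + 4 * (\<Sum>i\<in>UNIV. \<Sum>k\<in>UNIV. a$i^3 * b$k * qnormsq (U$k$i))
  + 4 * (\<Sum>i\<in>UNIV. \<Sum>k\<in>UNIV. a$i^2 * b$k^2 * qnormsq (U$k$i))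
  + 2 * (\<Sum>i\<in>UNIV. \<Sum>j\<in>UNIV. \<Sum>k\<in>UNIV. \<Sum>l\<in>UNIV. a$i * a$j * b$k * b$l * cross_term U i j l k)
  + 4 * (\<Sum>i\<in>UNIV. \<Sum>k\<in>UNIV. a$i * b$k^3 * qnormsq (U$k$i))
  + (\<Sum>k\<in>UNIV. b$k^4)"
proof -
  let ?A = "qdiag a" and ?C = "qmm (qadj U) (qmm (qdiag b) U)"
  have e1: "tr (mm4 ?A ?A ?A ?A) = (\<Sum>i\<in>UNIV. a$i^4)"
    by (simp add: qdiag_mult tr_qdiag power4_eq_xxxx mult.assoc)
  have e2: "tr (mm4 ?A ?A ?A ?C) = (\<Sum>i\<in>UNIV. \<Sum>k\<in>UNIV. a$i^3 * b$k * qnormsq (U$k$i))"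
    by (simp only: qdiag_qmm_qdiag tr_diag_conj) (simp add: power3_eq_cube mult.assoc)
  have e3: "tr (mm4 ?A ?A ?C ?C) = (\<Sum>i\<in>UNIV. \<Sum>k\<in>UNIV. a$i^2 * b$k^2 * qnormsq (U$k$i))"
    by (simp only: qdiag_qmm_qdiag conj_diag_mult[OF UU] tr_diag_conj) (simp add: power2_eq_square mult.assoc)
  have e4: "tr (mm4 ?A ?C ?C ?C) = (\<Sum>i\<in>UNIV. \<Sum>k\<in>UNIV. a$i * b$k^3 * qnormsq (U$k$i))"
    by (simp only: qdiag_qmm_qdiag conj_diag_mult[OF UU] tr_diag_conj) (simp add: power3_eq_cube mult.assoc)
  have e5: "tr (mm4 ?C ?C ?C ?C) = (\<Sum>k\<in>UNIV. b$k^4)"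
    by (simp only: conj_diag_mult[OF UU] tr_conj_diag[OF UU]) (simp add: power4_eq_xxxx mult.assoc)
  show ?thesis using tr_pow4_add[of ?A ?C] e1 e2 e3 e4 e5 tr_alternating[of a U b] by linarith
qed

definition unitary :: "'n::finite qmat \<Rightarrow> bool" where
  "unitary U \<longleftrightarrow> qmm (qadj U) U = qid \<and> qmm U (qadj U) = qid"

lemma qnormsq_qmul: "qnormsq (qmul x y) = qnormsq x * qnormsq y"
  by (simp add: qnormsq_def power2_eq_square algebra_simps)

lemma qre_qmul_bound: "\<bar>qre (qmul p q)\<bar> \<le> (qnormsq p + qnormsq q) / 2"
proof -
  have "0 \<le> (p$1-q$1)^2 + (p$2+q$2)^2 + (p$3+q$3)^2 + (p$4+q$4)^2" by simp
  moreover have "0 \<le> (p$1+q$1)^2 + (p$2-q$2)^2 + (p$3-q$3)^2 + (p$4-q$4)^2" by simp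
  ultimately show ?thesis
    unfolding abs_le_iff qre_def qmul_nth qnormsq_def power2_eq_square by (simp add: algebra_simps)
qed

context fixes U :: "'n::finite qmat" assumes U: "unitary U"
begin

lemma unitary_col_normsq_sum: "(\<Sum>k\<in>UNIV. qnormsq (U$k$i)) = 1"
proof -
  have "qmm (qadj U) U $ i $ i = qid $ i $ i" using U by (simp add: unitary_def)
  then have "qre (qmm (qadj U) U $ i $ i) = 1" by simp
  then show ?thesis by (simp add: qre_sum qmul_conj_self)
qed

lemma unitary_row_normsq_sum: "(\<Sum>j\<in>UNIV. qnormsq (U$k$j)) = 1"
proof -
  have "qmm U (qadj U) $ k $ k = qid $ k $ k" using U by (simp add: unitary_def)
  then have "qre (qmm U (qadj U) $ k $ k) = 1" by simp
  then show ?thesis by (simp add: qre_sum qmul_self_conj)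
qed

lemma unitary_entry_normsq_le1: "qnormsq (U$k$i) \<le> 1"
proof -
  have "qnormsq (U$k$i) \<le> (\<Sum>k\<in>UNIV. qnormsq (U$k$i))"
    by (rule member_le_sum) (auto simp: qnormsq_nonneg)
  then show ?thesis using unitary_col_normsq_sum by simp
qed

lemma unitary_cross_term_sum_zero: assumes "i \<noteq> j" shows "(\<Sum>k\<in>UNIV. \<Sum>l\<in>UNIV. cross_term U i j k l) = 0"
proof -
  let ?x = "\<lambda>k. qmul (qconj (U$k$i)) (U$k$j)"
  have "qmm (qadj U) U $ i $ j = qid $ i $ j" using U by (simp add: unitary_def)
  then have s0: "(\<Sum>k\<in>UNIV. ?x k) = 0" using assms by simp
  have "(\<Sum>k\<in>UNIV. \<Sum>l\<in>UNIV. cross_term U i j k l) = qre (qmul (\<Sum>k\<in>UNIV. ?x k) (qconj (\<Sum>l\<in>UNIV. ?x l)))"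
    by (simp add: cross_term_def qre_sum qmul_sum_left qmul_sum_right qconj_sum qconj_qmul) (rule sum.swap)
  also have "\<dots> = 0" using s0 by simp
  finally show ?thesis .
qed

lemma unitary_cross_term_bound: "\<bar>cross_term U i j k l\<bar> \<le> 1"
proof -
  have "\<bar>cross_term U i j k l\<bar> \<le> (qnormsq (qmul (qconj (U$k$i)) (U$k$j)) + qnormsq (qmul (qconj (U$l$j)) (U$l$i))) / 2"
    unfolding cross_term_def by (rule qre_qmul_bound)
  also have "\<dots> = (qnormsq (U$k$i) * qnormsq (U$k$j) + qnormsq (U$l$j) * qnormsq (U$l$i)) / 2"
    by (simp add: qnormsq_qmul)
  also have "\<dots> \<le> 1"
    using mult_le_one[OF unitary_entry_normsq_le1 qnormsq_nonneg unitary_entry_normsq_le1, of k i k j]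
          mult_le_one[OF unitary_entry_normsq_le1 qnormsq_nonneg unitary_entry_normsq_le1, of l j l i] by simp
  finally show ?thesis .
qed

end

lemma qmul_chi: "qmul a b = (\<chi> c. if c = 1 then a$1*b$1 - a$2*b$2 - a$3*b$3 - a$4*b$4
   else if c = 2 then a$1*b$2 + a$2*b$1 + a$3*b$4 - a$4*b$3
   else if c = 3 then a$1*b$3 - a$2*b$4 + a$3*b$1 + a$4*b$2
   else a$1*b$4 + a$2*b$3 - a$3*b$2 + a$4*b$1)"
  by (simp add: q_eq_iff)

lemma continuous_on_qmul [continuous_intros]:
  assumes "continuous_on S f" "continuous_on S g"
  shows "continuous_on S (\<lambda>x. qmul (f x) (g x))"
  unfolding qmul_chi
  apply (rule continuous_on_vec_lambda)
  subgoal for c by (cases "c = 1"; cases "c = 2"; cases "c = 3"; simp; intro continuous_intros assms)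
  done

lemma continuous_on_qconj [continuous_intros]:
  assumes "continuous_on S f"
  shows "continuous_on S (\<lambda>x. qconj (f x))"
  unfolding qconj_def
  apply (rule continuous_on_vec_lambda)
  subgoal for c by (cases "c = 1"; simp; intro continuous_intros assms)
  done

lemma continuous_on_qnormsq [continuous_intros]:
  assumes "continuous_on S f"
  shows "continuous_on S (\<lambda>x. qnormsq (f x))"
  unfolding qnormsq_def by (intro continuous_intros assms)

lemma continuous_on_qre [continuous_intros]:
  assumes "continuous_on S f"
  shows "continuous_on S (\<lambda>x. qre (f x))"
  unfolding qre_def by (intro continuous_intros assms)

lemma continuous_on_cross_term [continuous_intros]: "continuous_on S (\<lambda>X. cross_term X i j k l)"
  unfolding cross_term_def by (intro continuous_intros)

lemma measurable_continuous_comp: "continuous_on UNIV f \<Longrightarrow> U \<in> borel_measurable M \<Longrightarrow> (\<lambda>x. f (U x)) \<in> borel_measurable M"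
  using borel_measurable_continuous_onI measurable_compose by blast

lemma continuous_on_qmm [continuous_intros]:
  assumes "continuous_on S f" "continuous_on S g"
  shows "continuous_on S (\<lambda>x. qmm (f x) (g x))"
  unfolding qmm_def by (intro continuous_on_vec_lambda continuous_on_sum continuous_on_qmul continuous_on_component assms)

lemma continuous_on_qadj [continuous_intros]:
  assumes "continuous_on S f"
  shows "continuous_on S (\<lambda>x. qadj (f x))"
  unfolding qadj_def by (intro continuous_on_vec_lambda continuous_on_qconj continuous_on_component assms)

lemma continuous_on_qofreal [continuous_intros]:
  assumes "continuous_on S f"
  shows "continuous_on S (\<lambda>x. qofreal (f x))"
  unfolding qofreal_def
  apply (rule continuous_on_vec_lambda)
  subgoal for c by (cases "c = 1"; simp; intro continuous_intros assms)
  done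

lemma continuous_on_qdiag [continuous_intros]:
  assumes "continuous_on S f"
  shows "continuous_on S (\<lambda>x. qdiag (f x))"
  unfolding qdiag_def
  apply (rule continuous_on_vec_lambda)+
  subgoal for i j by (cases "i = j"; simp; intro continuous_intros assms)
  done

lemma continuous_on_qtrace [continuous_intros]:
  assumes "continuous_on S f"
  shows "continuous_on S (\<lambda>x. qtrace (f x))"
  unfolding qtrace_def by (intro continuous_on_sum continuous_on_component assms)

lemma continuous_on_qpow4 [continuous_intros]:
  assumes "continuous_on S f"
  shows "continuous_on S (\<lambda>x. qpow4 (f x))"
  unfolding qpow4_def by (intro continuous_on_qmm assms)

section \<open>Permutation-exchangeable random unitary matrices\<close>

text \<open>The integral form of \<open>perm_invariant\<close>; it is what all three random matrices of
  the theorem provide, the uniform permutation matrix through an explicit finite sum.\<close>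

definition perm_exch :: "'w measure \<Rightarrow> ('w \<Rightarrow> 'n::finite qmat) \<Rightarrow> bool" where
  "perm_exch M U \<longleftrightarrow> (\<forall>\<rho> \<tau> (f::'n qmat \<Rightarrow> real). \<rho> permutes UNIV \<longrightarrow> \<tau> permutes UNIV \<longrightarrow>
     f \<in> borel_measurable borel \<longrightarrow>
     (\<integral>\<omega>. f (\<chi> i j. U \<omega> $ \<rho> i $ \<tau> j) \<partial>M) = (\<integral>\<omega>. f (U \<omega>) \<partial>M))"

lemma perm_exchD:
  assumes "perm_exch M U" "\<rho> permutes UNIV" "\<tau> permutes UNIV" "continuous_on UNIV (f::'n::finite qmat \<Rightarrow> real)"
  shows "(\<integral>\<omega>. f (\<chi> i j. U \<omega> $ \<rho> i $ \<tau> j) \<partial>M) = (\<integral>\<omega>. f (U \<omega>) \<partial>M)"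
  using assms borel_measurable_continuous_onI unfolding perm_exch_def by blast

lemma permutes_map1: "\<exists>\<rho>. \<rho> permutes (UNIV::'n::finite set) \<and> \<rho> a = b"
  by (intro exI[of _ "Transposition.transpose a b"]) (auto intro: permutes_swap_id)

lemma permutes_map2:
  fixes a b c d :: "'n::finite"
  assumes "a \<noteq> b" "c \<noteq> d"
  shows "\<exists>\<rho>. \<rho> permutes (UNIV::'n set) \<and> \<rho> a = c \<and> \<rho> b = d"
proof -
  let ?b1 = "Transposition.transpose a c b"
  have b1: "?b1 \<noteq> c" using assms by (auto simp: Transposition.transpose_def)
  let ?r = "Transposition.transpose ?b1 d \<circ> Transposition.transpose a c"
  have "?r permutes UNIV" by (intro permutes_compose permutes_swap_id) auto
  moreover have "?r a = c" using b1 assms by (auto simp: Transposition.transpose_def)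
  moreover have "?r b = d" by (simp add: Transposition.transpose_def)
  ultimately show ?thesis by blast
qed

lemma sum_if_eq_const:
  fixes k :: "'n::finite"
  shows "(\<Sum>l\<in>UNIV. if l = k then a else b) = a + (real CARD('n) - 1) * (b::real)"
proof -
  have "(\<Sum>l\<in>UNIV. if l = k then a else b) = (\<Sum>l\<in>UNIV. b + (if l = k then a - b else 0))"
    by (rule sum.cong) auto
  also have "\<dots> = real CARD('n) * b + (a - b)" by (simp add: sum.distrib)
  finally show ?thesis by (simp add: algebra_simps)
qed

lemma cross_term_same_col: "cross_term X i i k l = qnormsq (X$k$i) * qnormsq (X$l$i)"
  by (simp add: cross_term_def qre_normsq_same_col)

lemma cross_term_same_row: "cross_term X i j k k = qnormsq (X$k$i) * qnormsq (X$k$j)"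
  by (simp add: cross_term_def qre_normsq_same_row)

text \<open>The expected cross term, solved from the row, column and orthogonality relations of a
  unitary matrix, given \<open>w = E |U\<^sub>k\<^sub>i|\<^sup>4\<close>.\<close>

definition cross_moment :: "real \<Rightarrow> real \<Rightarrow> 'n \<Rightarrow> 'n \<Rightarrow> 'n \<Rightarrow> 'n \<Rightarrow> real" where
  "cross_moment m w i j k l = (if i = j then (if k = l then w else (1/m - w)/(m-1))
      else (if k = l then (1/m - w)/(m-1) else - ((1/m - w)/(m-1)) / (m-1)))"

locale perm_exch_unitary =
  fixes M :: "'w measure" and U :: "'w \<Rightarrow> 'n::finite qmat"
  assumes ps: "prob_space M"
    and meas: "U \<in> borel_measurable M"
    and unit: "AE \<omega> in M. unitary (U \<omega>)"
    and ex: "perm_exch M U"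
    and card2: "CARD('n) \<ge> 2"
begin

interpretation prob_space M by (rule ps)

lemma integrable_bounded_of_unitary:
  fixes G :: "'n qmat \<Rightarrow> real" and C :: real
  assumes "continuous_on UNIV G" "\<And>X. unitary X \<Longrightarrow> \<bar>G X\<bar> \<le> C"
  shows "integrable M (\<lambda>\<omega>. G (U \<omega>))"
  by (rule integrable_const_bound[where B=C])
     (use unit assms in \<open>auto elim!: AE_mp intro: measurable_continuous_comp[OF _ meas]\<close>)

lemma integrable_entry_normsq: "integrable M (\<lambda>\<omega>. qnormsq (U \<omega> $ k $ i))"
  by (rule integrable_bounded_of_unitary[where C=1]) (auto intro!: continuous_intros simp: unitary_entry_normsq_le1 qnormsq_nonneg)

lemma integrable_entry_normsq_mult: "integrable M (\<lambda>\<omega>. qnormsq (U \<omega> $ k $ i) * qnormsq (U \<omega> $ l $ j))"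
  by (rule integrable_bounded_of_unitary[where C=1]) (auto intro!: continuous_intros mult_le_one simp: unitary_entry_normsq_le1 qnormsq_nonneg)

lemma integrable_entry_normsq_sq: "integrable M (\<lambda>\<omega>. (qnormsq (U \<omega> $ k $ i))^2)"
  using integrable_entry_normsq_mult[of k i k i] by (simp add: power2_eq_square)

lemma integrable_cross_term: "integrable M (\<lambda>\<omega>. cross_term (U \<omega>) i j k l)"
  by (rule integrable_bounded_of_unitary[where C=1]) (auto intro!: continuous_intros simp: unitary_cross_term_bound)

definition "m = real CARD('n)"

lemma m_ge_2: "m \<ge> 2" using card2 by (simp add: m_def)

lemma expectation_entry_normsq: "(\<integral>\<omega>. qnormsq (U \<omega> $ k $ i) \<partial>M) = 1 / m"
proof -
  have eq: "(\<integral>\<omega>. qnormsq (U \<omega> $ l $ i) \<partial>M) = (\<integral>\<omega>. qnormsq (U \<omega> $ k $ i) \<partial>M)" for l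
  proof -
    obtain \<rho> where r: "\<rho> permutes UNIV" "\<rho> k = l" using permutes_map1 by blast
    have "(\<integral>\<omega>. (\<lambda>X. qnormsq (X $ k $ i)) (\<chi> i j. U \<omega> $ \<rho> i $ id j) \<partial>M) = (\<integral>\<omega>. qnormsq (U \<omega> $ k $ i) \<partial>M)"
      by (rule perm_exchD[OF ex r(1) permutes_id]) (intro continuous_intros)
    then show ?thesis using r by simp
  qed
  have "(\<integral>\<omega>. (\<Sum>l\<in>UNIV. qnormsq (U \<omega> $ l $ i)) \<partial>M) = (\<integral>\<omega>. 1 \<partial>M)"
    by (rule integral_cong_AE) (use unit in \<open>auto intro!: borel_measurable_sum measurable_continuous_comp[OF _ meas] continuous_intros elim!: AE_mp simp: unitary_col_normsq_sum\<close>)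
  moreover have "(\<integral>\<omega>. (\<Sum>l\<in>UNIV. qnormsq (U \<omega> $ l $ i)) \<partial>M) = (\<Sum>l\<in>UNIV. (\<integral>\<omega>. qnormsq (U \<omega> $ l $ i) \<partial>M))"
    by (rule Bochner_Integration.integral_sum) (rule integrable_entry_normsq)
  ultimately have "(\<Sum>l\<in>UNIV. (\<integral>\<omega>. qnormsq (U \<omega> $ l $ i) \<partial>M)) = 1"
    by (simp add: prob_space)
  moreover have "(\<Sum>l\<in>UNIV. (\<integral>\<omega>. qnormsq (U \<omega> $ l $ i) \<partial>M)) = (\<Sum>l\<in>(UNIV::'n set). (\<integral>\<omega>. qnormsq (U \<omega> $ k $ i) \<partial>M))"
    by (intro sum.cong refl eq)
  ultimately have "m * (\<integral>\<omega>. qnormsq (U \<omega> $ k $ i) \<partial>M) = 1"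
    by (simp add: m_def)
  then show ?thesis using m_ge_2 by (simp add: field_simps)
qed

abbreviation "nq X k i \<equiv> qnormsq (X $ k $ i)"

lemma entry_sq_moment_eq: "(\<integral>\<omega>. (nq (U \<omega>) k i)^2 \<partial>M) = (\<integral>\<omega>. (nq (U \<omega>) k' i')^2 \<partial>M)"
proof -
  obtain \<rho> where r: "\<rho> permutes UNIV" "\<rho> k' = k" using permutes_map1 by blast
  obtain \<tau> where t: "\<tau> permutes UNIV" "\<tau> i' = i" using permutes_map1 by blast
  have "(\<integral>\<omega>. (\<lambda>X. (nq X k' i')^2) (\<chi> i j. U \<omega> $ \<rho> i $ \<tau> j) \<partial>M) = (\<integral>\<omega>. (nq (U \<omega>) k' i')^2 \<partial>M)"
    by (rule perm_exchD[OF ex r(1) t(1)]) (intro continuous_intros)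
  then show ?thesis using r t by simp
qed

lemma col_pair_moment_eq: assumes "k \<noteq> l" "k' \<noteq> l'"
  shows "(\<integral>\<omega>. nq (U \<omega>) k i * nq (U \<omega>) l i \<partial>M) = (\<integral>\<omega>. nq (U \<omega>) k' i' * nq (U \<omega>) l' i' \<partial>M)"
proof -
  obtain \<rho> where r: "\<rho> permutes UNIV" "\<rho> k' = k" "\<rho> l' = l" using permutes_map2[OF assms(2,1)] by blast
  obtain \<tau> where t: "\<tau> permutes UNIV" "\<tau> i' = i" using permutes_map1 by blast
  have "(\<integral>\<omega>. (\<lambda>X. nq X k' i' * nq X l' i') (\<chi> i j. U \<omega> $ \<rho> i $ \<tau> j) \<partial>M) = (\<integral>\<omega>. nq (U \<omega>) k' i' * nq (U \<omega>) l' i' \<partial>M)"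
    by (rule perm_exchD[OF ex r(1) t(1)]) (intro continuous_intros)
  then show ?thesis using r t by simp
qed

lemma row_pair_moment_eq: assumes "i \<noteq> j" "i' \<noteq> j'"
  shows "(\<integral>\<omega>. nq (U \<omega>) k i * nq (U \<omega>) k j \<partial>M) = (\<integral>\<omega>. nq (U \<omega>) k' i' * nq (U \<omega>) k' j' \<partial>M)"
proof -
  obtain \<rho> where r: "\<rho> permutes UNIV" "\<rho> k' = k" using permutes_map1 by blast
  obtain \<tau> where t: "\<tau> permutes UNIV" "\<tau> i' = i" "\<tau> j' = j" using permutes_map2[OF assms(2,1)] by blast
  have "(\<integral>\<omega>. (\<lambda>X. nq X k' i' * nq X k' j') (\<chi> i j. U \<omega> $ \<rho> i $ \<tau> j) \<partial>M) = (\<integral>\<omega>. nq (U \<omega>) k' i' * nq (U \<omega>) k' j' \<partial>M)"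
    by (rule perm_exchD[OF ex r(1) t(1)]) (intro continuous_intros)
  then show ?thesis using r t by simp
qed

lemma cross_term_moment_eq: assumes "i \<noteq> j" "i' \<noteq> j'" "k \<noteq> l" "k' \<noteq> l'"
  shows "(\<integral>\<omega>. cross_term (U \<omega>) i j k l \<partial>M) = (\<integral>\<omega>. cross_term (U \<omega>) i' j' k' l' \<partial>M)"
proof -
  obtain \<rho> where r: "\<rho> permutes UNIV" "\<rho> k' = k" "\<rho> l' = l" using permutes_map2[OF assms(4,3)] by blast
  obtain \<tau> where t: "\<tau> permutes UNIV" "\<tau> i' = i" "\<tau> j' = j" using permutes_map2[OF assms(2,1)] by blast
  have "(\<integral>\<omega>. (\<lambda>X. cross_term X i' j' k' l') (\<chi> i j. U \<omega> $ \<rho> i $ \<tau> j) \<partial>M) = (\<integral>\<omega>. cross_term (U \<omega>) i' j' k' l' \<partial>M)"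
    by (rule perm_exchD[OF ex r(1) t(1)]) (intro continuous_intros)
  then show ?thesis using r t by (simp add: cross_term_def)
qed

lemma col_moment_relation: assumes "k \<noteq> l"
  shows "(\<integral>\<omega>. (nq (U \<omega>) k i)^2 \<partial>M) + (m - 1) * (\<integral>\<omega>. nq (U \<omega>) k i * nq (U \<omega>) l i \<partial>M) = 1 / m"
proof -
  let ?w = "(\<integral>\<omega>. (nq (U \<omega>) k i)^2 \<partial>M)" and ?v = "(\<integral>\<omega>. nq (U \<omega>) k i * nq (U \<omega>) l i \<partial>M)"
  have "(\<integral>\<omega>. (\<Sum>l'\<in>UNIV. nq (U \<omega>) k i * nq (U \<omega>) l' i) \<partial>M) = (\<integral>\<omega>. nq (U \<omega>) k i \<partial>M)"
    by (rule integral_cong_AE) (use unit in \<open>auto intro!: borel_measurable_sum measurable_continuous_comp[OF _ meas] continuous_intros elim!: AE_mp simp: unitary_col_normsq_sum sum_distrib_left[symmetric]\<close>)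
  moreover have "(\<integral>\<omega>. (\<Sum>l'\<in>UNIV. nq (U \<omega>) k i * nq (U \<omega>) l' i) \<partial>M) = (\<Sum>l'\<in>UNIV. (\<integral>\<omega>. nq (U \<omega>) k i * nq (U \<omega>) l' i \<partial>M))"
    by (rule Bochner_Integration.integral_sum) (rule integrable_entry_normsq_mult)
  moreover have "(\<Sum>l'\<in>UNIV. (\<integral>\<omega>. nq (U \<omega>) k i * nq (U \<omega>) l' i \<partial>M)) = (\<Sum>l'\<in>(UNIV::'n set). if l' = k then ?w else ?v)"
    by (intro sum.cong refl) (use assms in \<open>auto simp: power2_eq_square intro!: col_pair_moment_eq\<close>)
  ultimately show ?thesis using sum_if_eq_const[of k ?w ?v] by (simp add: expectation_entry_normsq m_def)
qed

lemma row_moment_relation: assumes "i \<noteq> j"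
  shows "(\<integral>\<omega>. (nq (U \<omega>) k i)^2 \<partial>M) + (m - 1) * (\<integral>\<omega>. nq (U \<omega>) k i * nq (U \<omega>) k j \<partial>M) = 1 / m"
proof -
  let ?w = "(\<integral>\<omega>. (nq (U \<omega>) k i)^2 \<partial>M)" and ?v = "(\<integral>\<omega>. nq (U \<omega>) k i * nq (U \<omega>) k j \<partial>M)"
  have "(\<integral>\<omega>. (\<Sum>j'\<in>UNIV. nq (U \<omega>) k i * nq (U \<omega>) k j') \<partial>M) = (\<integral>\<omega>. nq (U \<omega>) k i \<partial>M)"
    by (rule integral_cong_AE) (use unit in \<open>auto intro!: borel_measurable_sum measurable_continuous_comp[OF _ meas] continuous_intros elim!: AE_mp simp: unitary_row_normsq_sum sum_distrib_left[symmetric]\<close>)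
  moreover have "(\<integral>\<omega>. (\<Sum>j'\<in>UNIV. nq (U \<omega>) k i * nq (U \<omega>) k j') \<partial>M) = (\<Sum>j'\<in>UNIV. (\<integral>\<omega>. nq (U \<omega>) k i * nq (U \<omega>) k j' \<partial>M))"
    by (rule Bochner_Integration.integral_sum) (rule integrable_entry_normsq_mult)
  moreover have "(\<Sum>j'\<in>UNIV. (\<integral>\<omega>. nq (U \<omega>) k i * nq (U \<omega>) k j' \<partial>M)) = (\<Sum>j'\<in>(UNIV::'n set). if j' = i then ?w else ?v)"
    by (intro sum.cong refl) (use assms in \<open>auto simp: power2_eq_square intro!: row_pair_moment_eq\<close>)
  ultimately show ?thesis using sum_if_eq_const[of i ?w ?v] by (simp add: expectation_entry_normsq m_def)
qed

lemma cross_moment_relation: assumes "i \<noteq> j" "k \<noteq> l"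
  shows "(\<integral>\<omega>. nq (U \<omega>) k i * nq (U \<omega>) k j \<partial>M) + (m - 1) * (\<integral>\<omega>. cross_term (U \<omega>) i j k l \<partial>M) = 0"
proof -
  let ?r = "(\<integral>\<omega>. nq (U \<omega>) k i * nq (U \<omega>) k j \<partial>M)" and ?z = "(\<integral>\<omega>. cross_term (U \<omega>) i j k l \<partial>M)"
  have "(\<integral>\<omega>. (\<Sum>k'\<in>UNIV. \<Sum>l'\<in>UNIV. cross_term (U \<omega>) i j k' l') \<partial>M) = (\<integral>\<omega>. 0 \<partial>M)"
    by (rule integral_cong_AE) (use unit in \<open>auto intro!: borel_measurable_sum measurable_continuous_comp[OF _ meas] continuous_intros elim!: AE_mp simp: unitary_cross_term_sum_zero assms\<close>)
  moreover have "(\<integral>\<omega>. (\<Sum>k'\<in>UNIV. \<Sum>l'\<in>UNIV. cross_term (U \<omega>) i j k' l') \<partial>M) = (\<Sum>k'\<in>UNIV. \<Sum>l'\<in>UNIV. (\<integral>\<omega>. cross_term (U \<omega>) i j k' l' \<partial>M))"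
    by (simp add: Bochner_Integration.integral_sum integrable_cross_term)
  moreover have "(\<Sum>k'\<in>UNIV. \<Sum>l'\<in>UNIV. (\<integral>\<omega>. cross_term (U \<omega>) i j k' l' \<partial>M)) = (\<Sum>k'\<in>(UNIV::'n set). \<Sum>l'\<in>(UNIV::'n set). if l' = k' then ?r else ?z)"
  proof (intro sum.cong refl)
    fix k' l' :: 'n
    show "(\<integral>\<omega>. cross_term (U \<omega>) i j k' l' \<partial>M) = (if l' = k' then ?r else ?z)"
    proof (cases "l' = k'")
      case True
      then show ?thesis using row_pair_moment_eq[OF assms(1) assms(1), of k' k] by (simp add: cross_term_same_row)
    next
      case False
      then show ?thesis using cross_term_moment_eq[OF assms(1) assms(1) _ assms(2), of k' l'] by simp
    qed
  qed
  moreover have "(\<Sum>k'\<in>(UNIV::'n set). \<Sum>l'\<in>(UNIV::'n set). if l' = k' then ?r else ?z) = (\<Sum>k'\<in>(UNIV::'n set). ?r + (m - 1) * ?z)"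
    by (intro sum.cong refl) (simp add: sum_if_eq_const m_def)
  ultimately have "m * (?r + (m - 1) * ?z) = 0"
    by (simp add: m_def)
  then show ?thesis using m_ge_2 by simp
qed

lemma col_pair_moment:
  assumes "k \<noteq> l"
  shows "(\<integral>\<omega>. nq (U \<omega>) k i * nq (U \<omega>) l i \<partial>M) = (1/m - (\<integral>\<omega>. (nq (U \<omega>) kr ir)^2 \<partial>M)) / (m - 1)"
proof -
  have "(\<integral>\<omega>. (nq (U \<omega>) kr ir)^2 \<partial>M) + (m - 1) * (\<integral>\<omega>. nq (U \<omega>) k i * nq (U \<omega>) l i \<partial>M) = 1 / m"
    using col_moment_relation[OF assms, of i] entry_sq_moment_eq[of k i kr ir] by simp
  then show ?thesis using m_ge_2 by (simp add: field_simps)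
qed

lemma row_pair_moment:
  assumes "i \<noteq> j"
  shows "(\<integral>\<omega>. nq (U \<omega>) k i * nq (U \<omega>) k j \<partial>M) = (1/m - (\<integral>\<omega>. (nq (U \<omega>) kr ir)^2 \<partial>M)) / (m - 1)"
proof -
  have "(\<integral>\<omega>. (nq (U \<omega>) kr ir)^2 \<partial>M) + (m - 1) * (\<integral>\<omega>. nq (U \<omega>) k i * nq (U \<omega>) k j \<partial>M) = 1 / m"
    using row_moment_relation[OF assms, of k] entry_sq_moment_eq[of k i kr ir] by simp
  then show ?thesis using m_ge_2 by (simp add: field_simps)
qed

lemma expectation_cross_term:
  "(\<integral>\<omega>. cross_term (U \<omega>) i j l k \<partial>M) = cross_moment m (\<integral>\<omega>. (nq (U \<omega>) kr ir)^2 \<partial>M) i j k l"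
proof (cases "i = j"; cases "k = l")
  assume "i = j" "k = l"
  then show ?thesis
    using entry_sq_moment_eq[of k i kr ir] by (simp add: cross_moment_def cross_term_same_col power2_eq_square)
next
  assume "i = j" "k \<noteq> l"
  then show ?thesis
    using col_pair_moment[of l k i kr ir] by (simp add: cross_moment_def cross_term_same_col)
next
  assume "i \<noteq> j" "k = l"
  then show ?thesis
    using row_pair_moment[of i j l kr ir] by (simp add: cross_moment_def cross_term_same_row)
next
  assume ij: "i \<noteq> j" and kl: "k \<noteq> l"
  have "(\<integral>\<omega>. nq (U \<omega>) l i * nq (U \<omega>) l j \<partial>M) + (m - 1) * (\<integral>\<omega>. cross_term (U \<omega>) i j l k \<partial>M) = 0"
    using cross_moment_relation[OF ij, of l k] kl by simp
  then have "(\<integral>\<omega>. cross_term (U \<omega>) i j l k \<partial>M) = - (\<integral>\<omega>. nq (U \<omega>) l i * nq (U \<omega>) l j \<partial>M) / (m - 1)"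
    using m_ge_2 by (simp add: field_simps)
  then show ?thesis
    using row_pair_moment[OF ij, of l kr ir] ij kl by (simp add: cross_moment_def)
qed

end

lemma indep_rv_integral_mult:
  fixes X :: "'w \<Rightarrow> 'a::topological_space" and Y :: "'w \<Rightarrow> 'b::topological_space"
    and f :: "'a \<Rightarrow> real" and g :: "'b \<Rightarrow> real"
  assumes ps: "prob_space M" and ind: "indep_rv M X Y"
    and X: "X \<in> borel_measurable M" and Y: "Y \<in> borel_measurable M"
    and f: "f \<in> borel_measurable borel" and g: "g \<in> borel_measurable borel"
    and fi: "integrable M (\<lambda>\<omega>. f (X \<omega>))" and gi: "integrable M (\<lambda>\<omega>. g (Y \<omega>))"
  shows "integrable M (\<lambda>\<omega>. f (X \<omega>) * g (Y \<omega>))"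
    and "(\<integral>\<omega>. f (X \<omega>) * g (Y \<omega>) \<partial>M) = (\<integral>\<omega>. f (X \<omega>) \<partial>M) * (\<integral>\<omega>. g (Y \<omega>) \<partial>M)"
proof -
  interpret prob_space M by (rule ps)
  have fX[measurable]: "(\<lambda>\<omega>. f (X \<omega>)) \<in> borel_measurable M" using f X by measurable
  have gY[measurable]: "(\<lambda>\<omega>. g (Y \<omega>)) \<in> borel_measurable M" using g Y by measurable
  have XY: "(\<lambda>\<omega>. (X \<omega>, Y \<omega>)) \<in> measurable M (borel \<Otimes>\<^sub>M borel)" using X Y by measurable
  have fg: "(\<lambda>(x, y). (f x, g y)) \<in> measurable (borel \<Otimes>\<^sub>M borel) (borel \<Otimes>\<^sub>M borel)" using f g by measurable
  have sfY: "sigma_finite_measure (distr (distr M borel Y) borel g)"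
  proof -
    have "distr (distr M borel Y) borel g = distr M borel (\<lambda>\<omega>. g (Y \<omega>))" using g Y by (simp add: distr_distr comp_def)
    then show ?thesis using prob_space_imp_sigma_finite[OF prob_space_distr[OF gY]] by simp
  qed
  have "distr M (borel \<Otimes>\<^sub>M borel) (\<lambda>\<omega>. (f (X \<omega>), g (Y \<omega>)))
      = distr (distr M (borel \<Otimes>\<^sub>M borel) (\<lambda>\<omega>. (X \<omega>, Y \<omega>))) (borel \<Otimes>\<^sub>M borel) (\<lambda>(x, y). (f x, g y))"
    by (subst distr_distr[OF fg XY]) (simp add: comp_def)
  also have "\<dots> = distr (distr M borel X \<Otimes>\<^sub>M distr M borel Y) (borel \<Otimes>\<^sub>M borel) (\<lambda>(x, y). (f x, g y))"
    using ind unfolding indep_rv_def by simp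
  also have "\<dots> = distr (distr M borel X) borel f \<Otimes>\<^sub>M distr (distr M borel Y) borel g"
    by (rule pair_measure_distr[symmetric]) (use f g sfY in auto)
  also have "\<dots> = distr M borel (\<lambda>\<omega>. f (X \<omega>)) \<Otimes>\<^sub>M distr M borel (\<lambda>\<omega>. g (Y \<omega>))"
    using f g X Y by (simp add: distr_distr comp_def)
  finally have iv: "indep_var borel (\<lambda>\<omega>. f (X \<omega>)) borel (\<lambda>\<omega>. g (Y \<omega>))"
    unfolding indep_var_distribution_eq using fX gY by simp
  show "integrable M (\<lambda>\<omega>. f (X \<omega>) * g (Y \<omega>))"
    using indep_var_integrable[OF iv] fi gi by simp
  show "(\<integral>\<omega>. f (X \<omega>) * g (Y \<omega>) \<partial>M) = (\<integral>\<omega>. f (X \<omega>) \<partial>M) * (\<integral>\<omega>. g (Y \<omega>) \<partial>M)"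
    using indep_var_lebesgue_integral[OF iv] fi gi by simp
qed

lemma abs_prod4_le:
  fixes x1 x2 x3 x4 :: real
  shows "\<bar>x1 * x2 * x3 * x4\<bar> \<le> (x1^4 + x2^4 + x3^4 + x4^4) / 4"
proof -
  have a: "2 * \<bar>x1*x2*x3*x4\<bar> \<le> (x1*x2)^2 + (x3*x4)^2"
  proof -
    have "0 \<le> (\<bar>x1*x2\<bar> - \<bar>x3*x4\<bar>)^2" by simp
    also have "\<dots> = (x1*x2)^2 + (x3*x4)^2 - 2 * \<bar>x1*x2*x3*x4\<bar>"
      by (simp add: power2_eq_square abs_mult algebra_simps)
    finally show ?thesis by simp
  qed
  have b: "2 * (x1*x2)^2 \<le> x1^4 + x2^4"
  proof -
    have "0 \<le> (x1^2 - x2^2)^2" by simp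
    then show ?thesis by (simp add: power2_eq_square power4_eq_xxxx algebra_simps)
  qed
  have c: "2 * (x3*x4)^2 \<le> x3^4 + x4^4"
  proof -
    have "0 \<le> (x3^2 - x4^2)^2" by simp
    then show ?thesis by (simp add: power2_eq_square power4_eq_xxxx algebra_simps)
  qed
  have "4 * \<bar>x1*x2*x3*x4\<bar> \<le> x1^4 + x2^4 + x3^4 + x4^4"
    using a b c by linarith
  then show ?thesis by simp
qed

lemma integrable_prod4:
  fixes x1 x2 x3 x4 :: "'w \<Rightarrow> real"
  assumes "integrable M (\<lambda>\<omega>. (x1 \<omega>)^4)" "integrable M (\<lambda>\<omega>. (x2 \<omega>)^4)"
    "integrable M (\<lambda>\<omega>. (x3 \<omega>)^4)" "integrable M (\<lambda>\<omega>. (x4 \<omega>)^4)"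
    and [measurable]: "x1 \<in> borel_measurable M" "x2 \<in> borel_measurable M" "x3 \<in> borel_measurable M" "x4 \<in> borel_measurable M"
  shows "integrable M (\<lambda>\<omega>. x1 \<omega> * x2 \<omega> * x3 \<omega> * x4 \<omega>)"
proof (rule Bochner_Integration.integrable_bound[where f="\<lambda>\<omega>. ((x1 \<omega>)^4 + (x2 \<omega>)^4 + (x3 \<omega>)^4 + (x4 \<omega>)^4) / 4"])
  show "integrable M (\<lambda>\<omega>. ((x1 \<omega>)^4 + (x2 \<omega>)^4 + (x3 \<omega>)^4 + (x4 \<omega>)^4) / 4)"
    using assms(1-4) by auto
  show "(\<lambda>\<omega>. x1 \<omega> * x2 \<omega> * x3 \<omega> * x4 \<omega>) \<in> borel_measurable M" by measurable
  show "AE \<omega> in M. norm (x1 \<omega> * x2 \<omega> * x3 \<omega> * x4 \<omega>) \<le> norm (((x1 \<omega>)^4 + (x2 \<omega>)^4 + (x3 \<omega>)^4 + (x4 \<omega>)^4) / 4)"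
    using abs_prod4_le by (auto simp: real_norm_def)
qed

section \<open>The fourth moment of a randomly rotated sum\<close>

text \<open>\<open>eig L1 L2 False i\<close> and \<open>eig L1 L2 True i\<close> are the \<open>i\<close>-th eigenvalues of
  \<open>\<Lambda>\<^sub>1\<close> and \<open>\<Lambda>\<^sub>2\<close>; the flag lets one lemma cover all mixed fourth moments.\<close>

definition eig :: "('w \<Rightarrow> real^'n) \<Rightarrow> ('w \<Rightarrow> real^'n) \<Rightarrow> bool \<Rightarrow> 'n \<Rightarrow> 'w \<Rightarrow> real" where
  "eig L1 L2 b i \<omega> = (if b then L2 \<omega> $ i else L1 \<omega> $ i)"

definition eig_pair :: "bool \<Rightarrow> 'n \<Rightarrow> ((real^'n) \<times> (real^'n)) \<Rightarrow> real" where
  "eig_pair b i p = (if b then snd p $ i else fst p $ i)"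

lemma continuous_on_eig_pair [continuous_intros]: "continuous_on S (eig_pair b i)"
  unfolding eig_pair_def by (cases b) (auto intro!: continuous_intros)

definition kappa_weight :: "real \<Rightarrow> 'n \<Rightarrow> 'n \<Rightarrow> real" where
  "kappa_weight m i j = (if i = j then 1 else - 1 / (m - 1))"

lemma cross_moment_affine: "m \<ge> 2 \<Longrightarrow> cross_moment m w i j k l = cross_moment m 0 i j k l + w * (kappa_weight m i j * kappa_weight m k l)"
  by (auto simp: cross_moment_def kappa_weight_def diff_divide_distrib divide_divide_eq_left minus_divide_left[symmetric] algebra_simps)

lemma kappa2_eq_weighted_sum: "kappa2 (x::real^'n::finite) = (1 / real CARD('n)) * (\<Sum>i\<in>UNIV. \<Sum>j\<in>UNIV. x$i * x$j * kappa_weight (real CARD('n)) i j)"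
proof -
  let ?m = "real CARD('n)"
  have "(\<Sum>j\<in>UNIV. x$i * x$j * kappa_weight ?m i j) = (x$i)^2 - (1 / (?m - 1)) * (\<Sum>j\<in>UNIV - {i}. x$i * x$j)" for i
  proof -
    have "(\<Sum>j\<in>UNIV. x$i * x$j * kappa_weight ?m i j) = x$i * x$i * kappa_weight ?m i i + (\<Sum>j\<in>UNIV - {i}. x$i * x$j * kappa_weight ?m i j)"
      by (subst sum.remove[of UNIV i]) auto
    also have "(\<Sum>j\<in>UNIV - {i}. x$i * x$j * kappa_weight ?m i j) = (\<Sum>j\<in>UNIV - {i}. - (1 / (?m - 1)) * (x$i * x$j))"
      by (rule sum.cong) (auto simp: kappa_weight_def)
    finally show ?thesis by (simp add: kappa_weight_def power2_eq_square sum_negf sum_divide_distrib[symmetric] sum_distrib_left[symmetric])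
  qed
  then have "(\<Sum>i\<in>UNIV. \<Sum>j\<in>UNIV. x$i * x$j * kappa_weight ?m i j) = (\<Sum>i\<in>UNIV. (x$i)^2) - (1 / (?m - 1)) * (\<Sum>i\<in>UNIV. \<Sum>j\<in>UNIV - {i}. x$i * x$j)"
    by (simp add: sum_subtractf sum_distrib_left)
  moreover have "1 / (?m * (?m - 1)) = (1 / ?m) * (1 / (?m - 1))" by simp
  ultimately show ?thesis unfolding kappa2_def by (simp add: right_diff_distrib)
qed

definition moment4_base :: "'w measure \<Rightarrow> ('w \<Rightarrow> real^'n::finite) \<Rightarrow> ('w \<Rightarrow> real^'n) \<Rightarrow> real" where
  "moment4_base M L1 L2 = (let m = real CARD('n); E = (\<lambda>b1 i1 b2 i2 b3 i3 b4 i4. (\<integral>\<omega>. eig L1 L2 b1 i1 \<omega> * eig L1 L2 b2 i2 \<omega> * eig L1 L2 b3 i3 \<omega> * eig L1 L2 b4 i4 \<omega> \<partial>M)) in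
   (1 / m) * ((\<Sum>i\<in>UNIV. (\<integral>\<omega>. (L1 \<omega> $ i)^4 \<partial>M))
  + 4 * (\<Sum>i\<in>UNIV. \<Sum>k\<in>UNIV. E False i False i False i True k * (1 / m))
  + 4 * (\<Sum>i\<in>UNIV. \<Sum>k\<in>UNIV. E False i False i True k True k * (1 / m))
  + 2 * (\<Sum>i\<in>UNIV. \<Sum>j\<in>UNIV. \<Sum>k\<in>UNIV. \<Sum>l\<in>UNIV. E False i False j True k True l * cross_moment m 0 i j k l)
  + 4 * (\<Sum>i\<in>UNIV. \<Sum>k\<in>UNIV. E False i True k True k True k * (1 / m))
  + (\<Sum>k\<in>UNIV. (\<integral>\<omega>. (L2 \<omega> $ k)^4 \<partial>M))))"

locale conj_model = perm_exch_unitary M U for M :: "'w measure" and U :: "'w \<Rightarrow> 'n::finite qmat" +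
  fixes L1 L2 :: "'w \<Rightarrow> real^'n"
  assumes L1m [measurable]: "L1 \<in> borel_measurable M" and L2m [measurable]: "L2 \<in> borel_measurable M"
    and i1: "\<And>i. integrable M (\<lambda>\<omega>. (L1 \<omega> $ i)^4)"
    and i2: "\<And>i. integrable M (\<lambda>\<omega>. (L2 \<omega> $ i)^4)"
    and ind: "indep_rv M (\<lambda>\<omega>. (L1 \<omega>, L2 \<omega>)) U"
begin

interpretation prob_space M by (rule ps)

lemma eig_pair_measurable [measurable]: "(\<lambda>\<omega>. (L1 \<omega>, L2 \<omega>)) \<in> borel_measurable M"
  by measurable

lemma L1_component_measurable [measurable]: "(\<lambda>\<omega>. L1 \<omega> $ i) \<in> borel_measurable M"
  by (rule measurable_continuous_comp[OF _ L1m]) (intro continuous_intros)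

lemma L2_component_measurable [measurable]: "(\<lambda>\<omega>. L2 \<omega> $ i) \<in> borel_measurable M"
  by (rule measurable_continuous_comp[OF _ L2m]) (intro continuous_intros)

lemma eig_measurable [measurable]: "eig L1 L2 b i \<in> borel_measurable M"
  by (cases b) (simp_all add: eig_def[abs_def])

lemma eig_integrable_pow4: "integrable M (\<lambda>\<omega>. (eig L1 L2 b i \<omega>)^4)"
  by (cases b) (simp_all add: eig_def i1 i2)

lemma integrable_mon: "integrable M (\<lambda>\<omega>. eig L1 L2 b1 i1 \<omega> * eig L1 L2 b2 i2 \<omega> * eig L1 L2 b3 i3 \<omega> * eig L1 L2 b4 i4 \<omega>)"
  by (rule integrable_prod4) (simp_all add: eig_integrable_pow4)

lemma integral_mon_mult:
  fixes G :: "'n qmat \<Rightarrow> real"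
  assumes "continuous_on UNIV G" "\<And>X. unitary X \<Longrightarrow> \<bar>G X\<bar> \<le> C"
  shows "integrable M (\<lambda>\<omega>. (eig L1 L2 b1 i1 \<omega> * eig L1 L2 b2 i2 \<omega> * eig L1 L2 b3 i3 \<omega> * eig L1 L2 b4 i4 \<omega>) * G (U \<omega>))"
    and "(\<integral>\<omega>. (eig L1 L2 b1 i1 \<omega> * eig L1 L2 b2 i2 \<omega> * eig L1 L2 b3 i3 \<omega> * eig L1 L2 b4 i4 \<omega>) * G (U \<omega>) \<partial>M)
       = (\<integral>\<omega>. eig L1 L2 b1 i1 \<omega> * eig L1 L2 b2 i2 \<omega> * eig L1 L2 b3 i3 \<omega> * eig L1 L2 b4 i4 \<omega> \<partial>M) * (\<integral>\<omega>. G (U \<omega>) \<partial>M)"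
proof -
  let ?F = "\<lambda>p. eig_pair b1 i1 p * eig_pair b2 i2 p * eig_pair b3 i3 p * eig_pair b4 i4 p"
  have e: "?F (L1 \<omega>, L2 \<omega>) = eig L1 L2 b1 i1 \<omega> * eig L1 L2 b2 i2 \<omega> * eig L1 L2 b3 i3 \<omega> * eig L1 L2 b4 i4 \<omega>" for \<omega>
    by (simp add: eig_def eig_pair_def)
  have F: "?F \<in> borel_measurable borel"
    by (rule borel_measurable_continuous_onI) (intro continuous_intros)
  have Gm: "G \<in> borel_measurable borel" by (rule borel_measurable_continuous_onI) fact
  have Fi: "integrable M (\<lambda>\<omega>. ?F (L1 \<omega>, L2 \<omega>))" unfolding e by (rule integrable_mon)
  have Gi: "integrable M (\<lambda>\<omega>. G (U \<omega>))" by (rule integrable_bounded_of_unitary) fact+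
  note r = indep_rv_integral_mult[OF ps ind eig_pair_measurable meas F Gm Fi Gi]
  show "integrable M (\<lambda>\<omega>. (eig L1 L2 b1 i1 \<omega> * eig L1 L2 b2 i2 \<omega> * eig L1 L2 b3 i3 \<omega> * eig L1 L2 b4 i4 \<omega>) * G (U \<omega>))"
    using r(1) unfolding e .
  show "(\<integral>\<omega>. (eig L1 L2 b1 i1 \<omega> * eig L1 L2 b2 i2 \<omega> * eig L1 L2 b3 i3 \<omega> * eig L1 L2 b4 i4 \<omega>) * G (U \<omega>) \<partial>M)
       = (\<integral>\<omega>. eig L1 L2 b1 i1 \<omega> * eig L1 L2 b2 i2 \<omega> * eig L1 L2 b3 i3 \<omega> * eig L1 L2 b4 i4 \<omega> \<partial>M) * (\<integral>\<omega>. G (U \<omega>) \<partial>M)"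
    using r(2) unfolding e .
qed

abbreviation "mon b1 i1 b2 i2 b3 i3 b4 i4 \<omega> \<equiv> eig L1 L2 b1 i1 \<omega> * eig L1 L2 b2 i2 \<omega> * eig L1 L2 b3 i3 \<omega> * eig L1 L2 b4 i4 \<omega>"

lemma integrable_mon_normsq: "integrable M (\<lambda>\<omega>. mon b1 i1 b2 i2 b3 i3 b4 i4 \<omega> * nq (U \<omega>) k i)"
  by (rule integral_mon_mult(1)[where C=1]) (auto intro!: continuous_intros simp: unitary_entry_normsq_le1 qnormsq_nonneg)

lemma integral_mon_normsq: "(\<integral>\<omega>. mon b1 i1 b2 i2 b3 i3 b4 i4 \<omega> * nq (U \<omega>) k i \<partial>M) = (\<integral>\<omega>. mon b1 i1 b2 i2 b3 i3 b4 i4 \<omega> \<partial>M) * (1 / m)"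
  by (subst integral_mon_mult(2)[where C=1]) (auto intro!: continuous_intros simp: unitary_entry_normsq_le1 qnormsq_nonneg expectation_entry_normsq)

lemma integrable_mon_cross_term: "integrable M (\<lambda>\<omega>. mon b1 i1 b2 i2 b3 i3 b4 i4 \<omega> * cross_term (U \<omega>) i j l k)"
  by (rule integral_mon_mult(1)[where C=1]) (auto intro!: continuous_intros simp: unitary_cross_term_bound)

lemma integral_mon_cross_term: "(\<integral>\<omega>. mon b1 i1 b2 i2 b3 i3 b4 i4 \<omega> * cross_term (U \<omega>) i j l k \<partial>M) =
    (\<integral>\<omega>. mon b1 i1 b2 i2 b3 i3 b4 i4 \<omega> \<partial>M) * cross_moment m (\<integral>\<omega>. (nq (U \<omega>) kr ir)^2 \<partial>M) i j k l"
  by (subst integral_mon_mult(2)[where C=1]) (auto intro!: continuous_intros simp: unitary_cross_term_bound expectation_cross_term)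

lemma tr_pow4_conj_monomials:
  assumes "unitary (U \<omega>)"
  shows "tr (qpow4 (qdiag (L1 \<omega>) + qmm (qadj (U \<omega>)) (qmm (qdiag (L2 \<omega>)) (U \<omega>)))) =
    (\<Sum>i\<in>UNIV. (L1 \<omega> $ i)^4)
  + 4 * (\<Sum>i\<in>UNIV. \<Sum>k\<in>UNIV. mon False i False i False i True k \<omega> * nq (U \<omega>) k i)
  + 4 * (\<Sum>i\<in>UNIV. \<Sum>k\<in>UNIV. mon False i False i True k True k \<omega> * nq (U \<omega>) k i)
  + 2 * (\<Sum>i\<in>UNIV. \<Sum>j\<in>UNIV. \<Sum>k\<in>UNIV. \<Sum>l\<in>UNIV. mon False i False j True k True l \<omega> * cross_term (U \<omega>) i j l k)
  + 4 * (\<Sum>i\<in>UNIV. \<Sum>k\<in>UNIV. mon False i True k True k True k \<omega> * nq (U \<omega>) k i)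
  + (\<Sum>k\<in>UNIV. (L2 \<omega> $ k)^4)"
  using assms unfolding unitary_def
  by (subst tr_pow4_conj) (simp_all add: eig_def power2_eq_square power3_eq_cube mult_ac)

lemma phi_pow4_conj_expanded:
  "phi M (\<lambda>\<omega>. qpow4 (qdiag (L1 \<omega>) + qmm (qadj (U \<omega>)) (qmm (qdiag (L2 \<omega>)) (U \<omega>)))) =
   (1 / m) * ((\<Sum>i\<in>UNIV. (\<integral>\<omega>. (L1 \<omega> $ i)^4 \<partial>M))
  + 4 * (\<Sum>i\<in>UNIV. \<Sum>k\<in>UNIV. (\<integral>\<omega>. mon False i False i False i True k \<omega> \<partial>M) * (1 / m))
  + 4 * (\<Sum>i\<in>UNIV. \<Sum>k\<in>UNIV. (\<integral>\<omega>. mon False i False i True k True k \<omega> \<partial>M) * (1 / m))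
  + 2 * (\<Sum>i\<in>UNIV. \<Sum>j\<in>UNIV. \<Sum>k\<in>UNIV. \<Sum>l\<in>UNIV. (\<integral>\<omega>. mon False i False j True k True l \<omega> \<partial>M)
          * cross_moment m (\<integral>\<omega>. (nq (U \<omega>) kr ir)^2 \<partial>M) i j k l)
  + 4 * (\<Sum>i\<in>UNIV. \<Sum>k\<in>UNIV. (\<integral>\<omega>. mon False i True k True k True k \<omega> \<partial>M) * (1 / m))
  + (\<Sum>k\<in>UNIV. (\<integral>\<omega>. (L2 \<omega> $ k)^4 \<partial>M)))"
proof -
  let ?R = "\<lambda>\<omega>. (\<Sum>i\<in>UNIV. (L1 \<omega> $ i)^4)
  + 4 * (\<Sum>i\<in>UNIV. \<Sum>k\<in>UNIV. mon False i False i False i True k \<omega> * nq (U \<omega>) k i)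
  + 4 * (\<Sum>i\<in>UNIV. \<Sum>k\<in>UNIV. mon False i False i True k True k \<omega> * nq (U \<omega>) k i)
  + 2 * (\<Sum>i\<in>UNIV. \<Sum>j\<in>UNIV. \<Sum>k\<in>UNIV. \<Sum>l\<in>UNIV. mon False i False j True k True l \<omega> * cross_term (U \<omega>) i j l k)
  + 4 * (\<Sum>i\<in>UNIV. \<Sum>k\<in>UNIV. mon False i True k True k True k \<omega> * nq (U \<omega>) k i)
  + (\<Sum>k\<in>UNIV. (L2 \<omega> $ k)^4)"
  have Rm: "?R \<in> borel_measurable M"
    by (rule borel_measurable_integrable) (simp add: integrable_mon_normsq integrable_mon_cross_term i1 i2)
  have "(\<lambda>\<omega>. (L1 \<omega>, L2 \<omega>, U \<omega>)) \<in> borel_measurable M" using meas by measurable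
  from measurable_continuous_comp[OF _ this, of "\<lambda>(a, b, V). tr (qpow4 (qdiag a + qmm (qadj V) (qmm (qdiag b) V)))"]
  have trm: "(\<lambda>\<omega>. tr (qpow4 (qdiag (L1 \<omega>) + qmm (qadj (U \<omega>)) (qmm (qdiag (L2 \<omega>)) (U \<omega>))))) \<in> borel_measurable M"
    by (simp add: case_prod_beta continuous_intros)
  have "(\<integral>\<omega>. tr (qpow4 (qdiag (L1 \<omega>) + qmm (qadj (U \<omega>)) (qmm (qdiag (L2 \<omega>)) (U \<omega>)))) \<partial>M) = (\<integral>\<omega>. ?R \<omega> \<partial>M)"
    by (rule integral_cong_AE) (use unit Rm trm in \<open>auto simp: tr_pow4_conj_monomials elim!: AE_mp\<close>)
  then show ?thesis
    unfolding phi_def m_def[symmetric]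
    by (simp add: integrable_mon_normsq integrable_mon_cross_term i1 i2 integral_mon_normsq
        integral_mon_cross_term[where kr=kr and ir=ir] del: integral_mult_right integral_mult_right_zero)
qed

lemma integral_kappa2_product: "(\<integral>\<omega>. kappa2 (L1 \<omega>) * kappa2 (L2 \<omega>) \<partial>M) =
  (1 / m^2) * (\<Sum>i\<in>UNIV. \<Sum>j\<in>UNIV. \<Sum>k\<in>UNIV. \<Sum>l\<in>UNIV. (\<integral>\<omega>. mon False i False j True k True l \<omega> \<partial>M) * (kappa_weight m i j * kappa_weight m k l))"
proof -
  have "kappa2 (L1 \<omega>) * kappa2 (L2 \<omega>) = (1 / m^2) * (\<Sum>i\<in>UNIV. \<Sum>j\<in>UNIV. \<Sum>k\<in>UNIV. \<Sum>l\<in>UNIV. (kappa_weight m i j * kappa_weight m k l) * mon False i False j True k True l \<omega>)" for \<omega>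
  proof -
    let ?A = "\<lambda>i j. L1 \<omega> $ i * L1 \<omega> $ j * kappa_weight m i j" and ?B = "\<lambda>k l. L2 \<omega> $ k * L2 \<omega> $ l * kappa_weight m k l"
    have "kappa2 (L1 \<omega>) * kappa2 (L2 \<omega>) = (1 / m^2) * ((\<Sum>i\<in>UNIV. \<Sum>j\<in>UNIV. ?A i j) * (\<Sum>k\<in>UNIV. \<Sum>l\<in>UNIV. ?B k l))"
      by (simp add: kappa2_eq_weighted_sum m_def power2_eq_square)
    also have "(\<Sum>i\<in>UNIV. \<Sum>j\<in>UNIV. ?A i j) * (\<Sum>k\<in>UNIV. \<Sum>l\<in>UNIV. ?B k l) = (\<Sum>i\<in>UNIV. \<Sum>j\<in>UNIV. \<Sum>k\<in>UNIV. \<Sum>l\<in>UNIV. ?A i j * ?B k l)"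
      by (simp only: sum_distrib_right) (simp only: sum_distrib_left)
    also have "\<dots> = (\<Sum>i\<in>UNIV. \<Sum>j\<in>UNIV. \<Sum>k\<in>UNIV. \<Sum>l\<in>UNIV. (kappa_weight m i j * kappa_weight m k l) * mon False i False j True k True l \<omega>)"
      by (intro sum.cong refl) (simp add: eig_def mult_ac)
    finally show ?thesis .
  qed
  then have "(\<lambda>\<omega>. kappa2 (L1 \<omega>) * kappa2 (L2 \<omega>)) = (\<lambda>\<omega>. (1 / m^2) * (\<Sum>i\<in>UNIV. \<Sum>j\<in>UNIV. \<Sum>k\<in>UNIV. \<Sum>l\<in>UNIV. (kappa_weight m i j * kappa_weight m k l) * mon False i False j True k True l \<omega>))"
    by (rule ext)
  then have "(\<integral>\<omega>. kappa2 (L1 \<omega>) * kappa2 (L2 \<omega>) \<partial>M) = (1 / m^2) * (\<integral>\<omega>. (\<Sum>i\<in>UNIV. \<Sum>j\<in>UNIV. \<Sum>k\<in>UNIV. \<Sum>l\<in>UNIV. (kappa_weight m i j * kappa_weight m k l) * mon False i False j True k True l \<omega>) \<partial>M)"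
    by simp
  also have "(\<integral>\<omega>. (\<Sum>i\<in>UNIV. \<Sum>j\<in>UNIV. \<Sum>k\<in>UNIV. \<Sum>l\<in>UNIV. (kappa_weight m i j * kappa_weight m k l) * mon False i False j True k True l \<omega>) \<partial>M)
     = (\<Sum>i\<in>UNIV. \<Sum>j\<in>UNIV. \<Sum>k\<in>UNIV. \<Sum>l\<in>UNIV. (\<integral>\<omega>. (kappa_weight m i j * kappa_weight m k l) * mon False i False j True k True l \<omega> \<partial>M))"
    by (simp add: integrable_mon)
  also have "\<dots> = (\<Sum>i\<in>UNIV. \<Sum>j\<in>UNIV. \<Sum>k\<in>UNIV. \<Sum>l\<in>UNIV. (\<integral>\<omega>. mon False i False j True k True l \<omega> \<partial>M) * (kappa_weight m i j * kappa_weight m k l))"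
    by (intro sum.cong refl) (simp only: integral_mult_right_zero mult.commute)
  finally show ?thesis .
qed

lemma phi_pow4_conj:
  "phi M (\<lambda>\<omega>. qpow4 (qdiag (L1 \<omega>) + qmm (qadj (U \<omega>)) (qmm (qdiag (L2 \<omega>)) (U \<omega>)))) =
   moment4_base M L1 L2 + 2 * m * (\<integral>\<omega>. (nq (U \<omega>) kr ir)^2 \<partial>M) * (\<integral>\<omega>. kappa2 (L1 \<omega>) * kappa2 (L2 \<omega>) \<partial>M)"
proof -
  let ?w = "(\<integral>\<omega>. (nq (U \<omega>) kr ir)^2 \<partial>M)"
  let ?E = "\<lambda>i j k l. (\<integral>\<omega>. mon False i False j True k True l \<omega> \<partial>M)"
  have s: "(\<Sum>i\<in>UNIV. \<Sum>j\<in>UNIV. \<Sum>k\<in>UNIV. \<Sum>l\<in>UNIV. ?E i j k l * cross_moment m ?w i j k l)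
     = (\<Sum>i\<in>UNIV. \<Sum>j\<in>UNIV. \<Sum>k\<in>UNIV. \<Sum>l\<in>UNIV. ?E i j k l * cross_moment m 0 i j k l)
       + ?w * (\<Sum>i\<in>UNIV. \<Sum>j\<in>UNIV. \<Sum>k\<in>UNIV. \<Sum>l\<in>UNIV. ?E i j k l * (kappa_weight m i j * kappa_weight m k l))"
    by (subst cross_moment_affine[OF m_ge_2]) (simp add: sum.distrib sum_distrib_left algebra_simps)
  have m0: "m \<noteq> 0" using m_ge_2 by simp
  show ?thesis
    unfolding phi_pow4_conj_expanded[where kr=kr and ir=ir] s integral_kappa2_product moment4_base_def Let_def m_def[symmetric]
    using m0 by (simp add: field_simps power2_eq_square)
qed

end

section \<open>Permutation matrices\<close>

lemma perm_qmat_qmm_nth: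
  assumes "\<sigma> permutes UNIV"
  shows "qmm (perm_qmat \<sigma>) X $ i $ j = X $ (inv \<sigma> i) $ j"
proof -
  have "(i = \<sigma> k) = (k = inv \<sigma> i)" for k using permutes_inv_eq[OF assms] by metis
  then have "qmm (perm_qmat \<sigma>) X $ i $ j = (\<Sum>k\<in>UNIV. if k = inv \<sigma> i then X $ k $ j else 0)"
    by (simp add: perm_qmat_def qone_eq if_distrib[of "\<lambda>x. qmul x _"] cong: if_cong)
  then show ?thesis by simp
qed

lemma qmm_perm_qmat_nth: "qmm X (perm_qmat \<tau>) $ i $ j = X $ i $ (\<tau> j)"
proof -
  have "qmm X (perm_qmat \<tau>) $ i $ j = (\<Sum>l\<in>UNIV. if l = \<tau> j then X $ i $ l else 0)"
    by (simp add: perm_qmat_def qone_eq if_distrib[of "\<lambda>x. qmul _ x"] cong: if_cong)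
  then show ?thesis by simp
qed

lemma perm_sandwich:
  assumes "\<sigma> permutes UNIV"
  shows "qmm (perm_qmat \<sigma>) (qmm X (perm_qmat \<tau>)) = (\<chi> i j. X $ inv \<sigma> i $ \<tau> j)"
proof -
  have "qmm (perm_qmat \<sigma>) (qmm X (perm_qmat \<tau>)) $ i $ j = (\<chi> i j. X $ inv \<sigma> i $ \<tau> j) $ i $ j" for i j
    by (subst perm_qmat_qmm_nth[OF assms], subst qmm_perm_qmat_nth) simp
  then show ?thesis unfolding vec_eq_iff by blast
qed

lemma measurable_perm_sandwich:
  assumes "U \<in> borel_measurable M"
  shows "(\<lambda>\<omega>. qmm P (qmm (U \<omega>) P')) \<in> borel_measurable M"
  by (rule measurable_continuous_comp[OF _ assms]) (intro continuous_intros)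

lemma perm_exch_of_perm_invariant:
  assumes U: "U \<in> borel_measurable M" and inv: "perm_invariant M U"
  shows "perm_exch M (U :: 'w \<Rightarrow> 'n::finite qmat)"
  unfolding perm_exch_def
proof (intro allI impI)
  fix \<rho> \<tau> :: "'n \<Rightarrow> 'n" and f :: "'n qmat \<Rightarrow> real"
  assume r: "\<rho> permutes UNIV" and t: "\<tau> permutes UNIV" and f: "f \<in> borel_measurable borel"
  let ?s = "inv \<rho>"
  have s: "?s permutes UNIV" using permutes_inv[OF r] .
  have e: "(\<chi> i j. U \<omega> $ \<rho> i $ \<tau> j) = qmm (perm_qmat ?s) (qmm (U \<omega>) (perm_qmat \<tau>))" for \<omega>
    by (simp add: perm_sandwich[OF s] permutes_inv_inv[OF r])
  have "(\<integral>\<omega>. f (qmm (perm_qmat ?s) (qmm (U \<omega>) (perm_qmat \<tau>))) \<partial>M)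
      = integral\<^sup>L (distr M borel (\<lambda>\<omega>. qmm (perm_qmat ?s) (qmm (U \<omega>) (perm_qmat \<tau>)))) f"
    by (rule integral_distr[symmetric]) (use measurable_perm_sandwich[OF U] f in auto)
  also have "\<dots> = integral\<^sup>L (distr M borel U) f" using inv s t by (simp add: perm_invariant_def)
  also have "\<dots> = (\<integral>\<omega>. f (U \<omega>) \<partial>M)" by (rule integral_distr) (use U f in auto)
  finally show "(\<integral>\<omega>. f (\<chi> i j. U \<omega> $ \<rho> i $ \<tau> j) \<partial>M) = (\<integral>\<omega>. f (U \<omega>) \<partial>M)"
    unfolding e .
qed

lemma beta_orth_unitary: "beta_orth \<beta> U \<Longrightarrow> unitary U"
  by (simp add: beta_orth_def unitary_def)

lemma beta_orth_AE_unitary: "AE \<omega> in M. beta_orth \<beta> (U \<omega>) \<Longrightarrow> AE \<omega> in M. unitary (U \<omega>)"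
  by (erule AE_mp) (simp add: beta_orth_unitary)

lemma perm_qmat_nth: "perm_qmat \<sigma> $ i $ j = (if i = \<sigma> j then qofreal 1 else 0)"
  by (simp add: perm_qmat_def qone_eq)

lemma qofreal1_ne0: "qofreal 1 \<noteq> 0"
  by (simp add: q_eq_iff)

lemma perm_qmat_inj: "perm_qmat \<sigma> = perm_qmat \<sigma>' \<Longrightarrow> \<sigma> = \<sigma>'"
proof
  fix j assume e: "perm_qmat \<sigma> = perm_qmat \<sigma>'"
  have "perm_qmat \<sigma> $ \<sigma> j $ j = qofreal 1" by (simp add: perm_qmat_nth)
  then have "perm_qmat \<sigma>' $ \<sigma> j $ j = qofreal 1" using e by simp
  then show "\<sigma> j = \<sigma>' j" by (metis (mono_tags) perm_qmat_nth qofreal1_ne0)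
qed

lemma perm_qmat_mult:
  assumes "\<tau> permutes UNIV"
  shows "qmm (perm_qmat \<tau>) (perm_qmat \<sigma>) = perm_qmat (\<tau> \<circ> \<sigma>)"
proof -
  have "(inv \<tau> i = \<sigma> j) = (i = \<tau> (\<sigma> j))" for i j
    using permutes_inv_eq[OF assms] by metis
  then show ?thesis
    by (simp only: vec_eq_iff perm_qmat_qmm_nth[OF assms]) (simp add: perm_qmat_nth)
qed

lemma qadj_perm_qmat:
  assumes "\<sigma> permutes UNIV"
  shows "qadj (perm_qmat \<sigma>) = perm_qmat (inv \<sigma>)"
proof -
  have "(j = \<sigma> i) = (i = inv \<sigma> j)" for i j
    using permutes_inv_eq[OF assms] by metis
  then show ?thesis
    by (simp add: vec_eq_iff perm_qmat_nth if_distrib[of qconj])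
qed

lemma perm_qmat_id: "perm_qmat id = qid"
  by (simp add: vec_eq_iff perm_qmat_nth)

lemma perm_qmat_unitary:
  assumes "\<sigma> permutes UNIV" shows "unitary (perm_qmat \<sigma>)"
  using assms
  by (simp add: unitary_def qadj_perm_qmat perm_qmat_mult permutes_inv permutes_inv_o perm_qmat_id)

context
  fixes M :: "'w measure" and Pm :: "'w \<Rightarrow> 'n::finite qmat"
  assumes ps: "prob_space M" and up: "unif_perm M Pm"
begin

interpretation prob_space M by (rule ps)

abbreviation "perms \<equiv> {\<sigma>::'n \<Rightarrow> 'n. \<sigma> permutes UNIV}"

lemma unif_perm_measurable [measurable]: "Pm \<in> borel_measurable M"
  using up by (simp add: unif_perm_def)

lemma finite_perms: "finite perms" by (rule finite_permutations) simp

lemma card_perms: "card perms = fact CARD('n)" by (rule card_permutations) auto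

lemma unif_perm_event: "{\<omega> \<in> space M. Pm \<omega> = c} \<in> sets M"
  by measurable

lemma unif_perm_prob: "\<sigma> \<in> perms \<Longrightarrow> prob {\<omega> \<in> space M. Pm \<omega> = perm_qmat \<sigma>} = 1 / fact CARD('n)"
  using up by (simp add: unif_perm_def)

lemma unif_perm_AE: "AE \<omega> in M. \<exists>\<sigma>\<in>perms. Pm \<omega> = perm_qmat \<sigma>"
proof -
  let ?A = "\<lambda>\<sigma>. {\<omega> \<in> space M. Pm \<omega> = perm_qmat \<sigma>}"
  have "prob (\<Union>\<sigma>\<in>perms. ?A \<sigma>) = (\<Sum>\<sigma>\<in>perms. prob (?A \<sigma>))"
    by (rule finite_measure_finite_Union) (auto simp: finite_perms unif_perm_event disjoint_family_on_def dest: perm_qmat_inj)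
  also have "\<dots> = 1" using card_perms by (simp add: unif_perm_prob)
  finally have "AE \<omega> in M. \<omega> \<in> (\<Union>\<sigma>\<in>perms. ?A \<sigma>)" by (rule AE_prob_1)
  then show ?thesis by auto
qed

lemma unif_perm_unitary: "AE \<omega> in M. unitary (Pm \<omega>)"
  using unif_perm_AE by eventually_elim (auto intro: perm_qmat_unitary)

lemma unif_perm_integral:
  fixes f :: "'n qmat \<Rightarrow> real"
  assumes f: "f \<in> borel_measurable borel"
  shows "(\<integral>\<omega>. f (Pm \<omega>) \<partial>M) = (\<Sum>\<sigma>\<in>perms. f (perm_qmat \<sigma>)) / fact CARD('n)"
proof -
  let ?A = "\<lambda>\<sigma>. {\<omega> \<in> space M. Pm \<omega> = perm_qmat \<sigma>}"
  have "(\<integral>\<omega>. f (Pm \<omega>) \<partial>M) = (\<integral>\<omega>. (\<Sum>\<sigma>\<in>perms. f (perm_qmat \<sigma>) * indicator (?A \<sigma>) \<omega>) \<partial>M)"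
  proof (rule integral_cong_AE)
    show "(\<lambda>\<omega>. f (Pm \<omega>)) \<in> borel_measurable M" using f by measurable
    show "(\<lambda>\<omega>. \<Sum>\<sigma>\<in>perms. f (perm_qmat \<sigma>) * indicator (?A \<sigma>) \<omega>) \<in> borel_measurable M"
      by measurable
    show "AE \<omega> in M. f (Pm \<omega>) = (\<Sum>\<sigma>\<in>perms. f (perm_qmat \<sigma>) * indicator (?A \<sigma>) \<omega>)"
      using unif_perm_AE AE_space
    proof eventually_elim
      case (elim \<omega>)
      then obtain \<sigma>0 where s0: "\<sigma>0 \<in> perms" "Pm \<omega> = perm_qmat \<sigma>0" by auto
      have "(\<Sum>\<sigma>\<in>perms. f (perm_qmat \<sigma>) * indicator (?A \<sigma>) \<omega>) = (\<Sum>\<sigma>\<in>perms. if \<sigma> = \<sigma>0 then f (perm_qmat \<sigma>0) else 0)"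
        using elim s0 by (intro sum.cong refl) (auto simp: indicator_def dest: perm_qmat_inj)
      also have "\<dots> = f (Pm \<omega>)" using s0 finite_perms by simp
      finally show ?case by simp
    qed
  qed
  also have "\<dots> = (\<Sum>\<sigma>\<in>perms. (\<integral>\<omega>. f (perm_qmat \<sigma>) * indicator (?A \<sigma>) \<omega> \<partial>M))"
    by (rule Bochner_Integration.integral_sum) (rule integrable_real_mult_indicator[OF unif_perm_event], simp)
  also have "\<dots> = (\<Sum>\<sigma>\<in>perms. f (perm_qmat \<sigma>) * prob (?A \<sigma>))"
    by (intro sum.cong refl) (simp add: Int_absorb2)
  also have "\<dots> = (\<Sum>\<sigma>\<in>perms. f (perm_qmat \<sigma>)) / fact CARD('n)"
    by (simp add: unif_perm_prob sum_divide_distrib)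
  finally show ?thesis .
qed

lemma unif_perm_exch: "perm_exch M Pm"
  unfolding perm_exch_def
proof (intro allI impI)
  fix \<rho> \<tau> :: "'n \<Rightarrow> 'n" and f :: "'n qmat \<Rightarrow> real"
  assume r: "\<rho> permutes UNIV" and t: "\<tau> permutes UNIV" and f: "f \<in> borel_measurable borel"
  let ?h = "\<lambda>X::'n qmat. f (\<chi> i j. X $ \<rho> i $ \<tau> j)"
  have hc: "continuous_on UNIV (\<lambda>X::'n qmat. (\<chi> i j. X $ \<rho> i $ \<tau> j))"
    by (intro continuous_intros)
  have h: "?h \<in> borel_measurable borel"
    using measurable_compose[OF borel_measurable_continuous_onI[OF hc] f] by (simp add: comp_def)
  let ?\<phi> = "\<lambda>\<sigma>. inv \<rho> \<circ> \<sigma> \<circ> \<tau>"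
  have eqP: "(\<chi> i j. perm_qmat \<sigma> $ \<rho> i $ \<tau> j) = perm_qmat (?\<phi> \<sigma>)" for \<sigma>
  proof -
    have "(\<rho> i = \<sigma> (\<tau> j)) = (i = inv \<rho> (\<sigma> (\<tau> j)))" for i j using permutes_inv_eq[OF r] by metis
    then show ?thesis by (simp add: vec_eq_iff perm_qmat_nth)
  qed
  have "(\<Sum>\<sigma>\<in>perms. ?h (perm_qmat \<sigma>)) = (\<Sum>\<sigma>\<in>perms. f (perm_qmat (?\<phi> \<sigma>)))"
    by (simp add: eqP)
  also have "\<dots> = (\<Sum>\<sigma>\<in>perms. f (perm_qmat \<sigma>))"
    by (rule sum.reindex_bij_witness[where j="?\<phi>" and i="\<lambda>\<sigma>. \<rho> \<circ> \<sigma> \<circ> inv \<tau>"])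
       (use permutes_inverses[OF r] permutes_inverses[OF t] r t in \<open>auto simp: fun_eq_iff intro!: permutes_compose permutes_inv\<close>)
  finally have "(\<Sum>\<sigma>\<in>perms. ?h (perm_qmat \<sigma>)) = (\<Sum>\<sigma>\<in>perms. f (perm_qmat \<sigma>))" .
  then show "(\<integral>\<omega>. f (\<chi> i j. Pm \<omega> $ \<rho> i $ \<tau> j) \<partial>M) = (\<integral>\<omega>. f (Pm \<omega>) \<partial>M)"
    using unif_perm_integral[OF h] unif_perm_integral[OF f] by simp
qed

lemma unif_perm_entry_normsq_sq: "(\<integral>\<omega>. (qnormsq (Pm \<omega> $ k $ i))^2 \<partial>M) = (\<integral>\<omega>. qnormsq (Pm \<omega> $ k $ i) \<partial>M)"
proof (rule integral_cong_AE)
  show "(\<lambda>\<omega>. (qnormsq (Pm \<omega> $ k $ i))^2) \<in> borel_measurable M"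
    by (rule measurable_continuous_comp[OF _ unif_perm_measurable]) (intro continuous_intros)
  show "(\<lambda>\<omega>. qnormsq (Pm \<omega> $ k $ i)) \<in> borel_measurable M"
    by (rule measurable_continuous_comp[OF _ unif_perm_measurable]) (intro continuous_intros)
  show "AE \<omega> in M. (qnormsq (Pm \<omega> $ k $ i))^2 = qnormsq (Pm \<omega> $ k $ i)"
    using unif_perm_AE by eventually_elim (auto simp: perm_qmat_nth)
qed

end

section \<open>Haar matrices\<close>

lemma beta_scalar_qconj: "beta_scalar \<beta> x \<Longrightarrow> beta_scalar \<beta> (qconj x)"
  by (simp add: beta_scalar_def)

lemma beta_orth_qadj: "beta_orth \<beta> V \<Longrightarrow> beta_orth \<beta> (qadj V)"
  by (auto simp: beta_orth_def beta_scalar_qconj)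

lemma beta_scalar_qofreal: "beta_scalar \<beta> (qofreal r)"
  by (simp add: beta_scalar_def)

lemma beta_scalar_zero: "beta_scalar \<beta> 0"
  by (simp add: beta_scalar_def)

lemma perm_beta_orth: "\<sigma> permutes UNIV \<Longrightarrow> beta_orth \<beta> (perm_qmat \<sigma>)"
  using perm_qmat_unitary[of \<sigma>]
  by (auto simp: beta_orth_def unitary_def perm_qmat_nth beta_scalar_qofreal beta_scalar_zero)

lemma measurable_qmm_pair [measurable]: "(\<lambda>x::'n::finite qmat \<times> 'n qmat. qmm (fst x) (snd x)) \<in> borel_measurable (borel \<Otimes>\<^sub>M borel)"
  by (rule borel_measurable_continuous_Pair[where H=qmm, OF measurable_fst measurable_snd]) (intro continuous_intros)

lemma measurable_qadj [measurable]: "(qadj :: 'n::finite qmat \<Rightarrow> _) \<in> borel_measurable borel"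
  by (rule borel_measurable_continuous_onI) (intro continuous_intros)

lemma measurable_qmm_left [measurable]: "(qmm V :: 'n::finite qmat \<Rightarrow> _) \<in> borel_measurable borel"
  by (rule borel_measurable_continuous_onI) (intro continuous_intros)

lemma measurable_qmm_right [measurable]: "((\<lambda>X. qmm X V) :: 'n::finite qmat \<Rightarrow> _) \<in> borel_measurable borel"
  by (rule borel_measurable_continuous_onI) (intro continuous_intros)

definition givens_coeff :: "'n \<Rightarrow> 'n \<Rightarrow> 'n \<Rightarrow> 'n \<Rightarrow> real" where
  "givens_coeff a b i j = (if i = a then (if j = a \<or> j = b then 1 / sqrt 2 else 0)
     else if i = b then (if j = a then - (1 / sqrt 2) else if j = b then 1 / sqrt 2 else 0)
     else (if i = j then 1 else 0))"

definition givens :: "'n \<Rightarrow> 'n \<Rightarrow> 'n::finite qmat" where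
  "givens a b = (\<chi> i j. qofreal (givens_coeff a b i j))"

lemma inverse_sqrt2_mult_self: "(1 / sqrt 2) * (1 / sqrt (2::real)) = 1 / 2"
  by (simp add: divide_simps)

lemma sum_UNIV_split_two:
  fixes F :: "'n::finite \<Rightarrow> real"
  assumes "a \<noteq> b"
  shows "(\<Sum>k\<in>UNIV. F k) = F a + F b + (\<Sum>k\<in>UNIV - {a, b}. F k)"
proof -
  have "(\<Sum>k\<in>UNIV. F k) = F a + (\<Sum>k\<in>UNIV - {a}. F k)" by (subst sum.remove[of UNIV a]) auto
  also have "(\<Sum>k\<in>UNIV - {a}. F k) = F b + (\<Sum>k\<in>UNIV - {a} - {b}. F k)"
    using assms by (subst sum.remove[of "UNIV - {a}" b]) auto
  also have "UNIV - {a} - {b} = UNIV - {a, b}" by auto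
  finally show ?thesis by simp
qed

lemma givens_coeff_outside: "k \<noteq> a \<Longrightarrow> k \<noteq> b \<Longrightarrow> givens_coeff a b k i = (if k = i then 1 else 0)"
  by (simp add: givens_coeff_def)

lemma sum_delta_mult_remove_two:
  fixes a b :: "'n::finite"
  shows "(\<Sum>k\<in>UNIV - {a, b}. (if k = i then 1 else 0) * (if k = j then 1 else (0::real)))
     = (if i = j \<and> i \<noteq> a \<and> i \<noteq> b then 1 else 0)"
proof -
  have "(\<Sum>k\<in>UNIV - {a, b}. (if k = i then 1 else 0) * (if k = j then 1 else (0::real)))
      = (\<Sum>k\<in>UNIV - {a, b}. if k = i then (if i = j then 1 else 0) else 0)"
    by (rule sum.cong) auto
  also have "\<dots> = (if i = j \<and> i \<noteq> a \<and> i \<noteq> b then 1 else 0)"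
    by (subst sum.delta) auto
  finally show ?thesis .
qed

lemma givens_coeff_orth_cols:
  fixes a b :: "'n::finite"
  assumes ab: "a \<noteq> b"
  shows "(\<Sum>k\<in>UNIV. givens_coeff a b k i * givens_coeff a b k j) = (if i = j then 1 else 0)"
proof -
  have "(\<Sum>k\<in>UNIV - {a, b}. givens_coeff a b k i * givens_coeff a b k j) = (\<Sum>k\<in>UNIV - {a, b}. (if k = i then 1 else 0) * (if k = j then 1 else (0::real)))"
    by (rule sum.cong) (auto simp: givens_coeff_outside)
  then show ?thesis using ab
    by (simp add: sum_UNIV_split_two[OF ab] sum_delta_mult_remove_two) (auto simp: givens_coeff_def inverse_sqrt2_mult_self)
qed

lemma givens_coeff_orth_rows:
  fixes a b :: "'n::finite"
  assumes ab: "a \<noteq> b"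
  shows "(\<Sum>k\<in>UNIV. givens_coeff a b i k * givens_coeff a b j k) = (if i = j then 1 else 0)"
proof -
  have "(\<Sum>k\<in>UNIV - {a, b}. givens_coeff a b i k * givens_coeff a b j k) = (if i = j \<and> i \<noteq> a \<and> i \<noteq> b then 1 else 0)"
  proof (cases "i = a \<or> i = b \<or> j = a \<or> j = b")
    case True
    then have "(\<Sum>k\<in>UNIV - {a, b}. givens_coeff a b i k * givens_coeff a b j k) = 0"
      by (intro sum.neutral) (auto simp: givens_coeff_def)
    then show ?thesis using True by auto
  next
    case False
    then have "(\<Sum>k\<in>UNIV - {a, b}. givens_coeff a b i k * givens_coeff a b j k) = (\<Sum>k\<in>UNIV - {a, b}. (if k = i then 1 else 0) * (if k = j then 1 else (0::real)))"
      by (intro sum.cong) (auto simp: givens_coeff_def)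
    then show ?thesis using False sum_delta_mult_remove_two[where a=a and b=b and i=i and j=j] by simp
  qed
  then show ?thesis using ab
    by (simp add: sum_UNIV_split_two[OF ab]) (auto simp: givens_coeff_def inverse_sqrt2_mult_self)
qed

lemma givens_beta_orth:
  assumes ab: "a \<noteq> b"
  shows "beta_orth \<beta> (givens a b)"
proof -
  have 1: "qmm (qadj (givens a b)) (givens a b) = qid"
  proof -
    have "qmm (qadj (givens a b)) (givens a b) $ i $ j = qid $ i $ j" for i j
      by (simp add: givens_def scaleR_qofreal qofreal_sum[symmetric] givens_coeff_orth_cols[OF ab])
    then show ?thesis unfolding vec_eq_iff by blast
  qed
  have 2: "qmm (givens a b) (qadj (givens a b)) = qid"
  proof -
    have "qmm (givens a b) (qadj (givens a b)) $ i $ j = qid $ i $ j" for i j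
      by (simp add: givens_def scaleR_qofreal qofreal_sum[symmetric] givens_coeff_orth_rows[OF ab])
    then show ?thesis unfolding vec_eq_iff by blast
  qed
  show ?thesis using 1 2 by (simp add: beta_orth_def givens_def beta_scalar_qofreal)
qed

lemma givens_qmm_row_a:
  assumes ab: "a \<noteq> b"
  shows "qmm (givens a b) X $ a $ i = (1 / sqrt 2) *\<^sub>R (X $ a $ i + X $ b $ i)"
proof -
  have "qmm (givens a b) X $ a $ i = (\<Sum>k\<in>UNIV. (if k = a then (1 / sqrt 2) *\<^sub>R X $ a $ i else 0) + (if k = b then (1 / sqrt 2) *\<^sub>R X $ b $ i else 0))"
    using ab by (auto simp: givens_def givens_coeff_def intro!: sum.cong)
  then show ?thesis by (simp add: sum.distrib scaleR_add_right)
qed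

lemma givens_qmm_row_b:
  assumes ab: "a \<noteq> b"
  shows "qmm (givens a b) X $ b $ i = (1 / sqrt 2) *\<^sub>R (X $ b $ i - X $ a $ i)"
proof -
  have "qmm (givens a b) X $ b $ i = (\<Sum>k\<in>UNIV. (if k = b then (1 / sqrt 2) *\<^sub>R X $ b $ i else 0) - (if k = a then (1 / sqrt 2) *\<^sub>R X $ a $ i else 0))"
    using ab by (auto simp: givens_def givens_coeff_def intro!: sum.cong)
  then show ?thesis by (simp add: sum_subtractf scaleR_diff_right)
qed

lemma closed_beta_scalar: "closed {x. beta_scalar \<beta> x}"
  unfolding beta_scalar_def
  by (cases "\<beta> = 1"; cases "\<beta> = 2"; simp; intro closed_Collect_conj closed_Collect_eq continuous_intros)

lemma closed_beta_orth: "closed {U :: 'n::finite qmat. beta_orth \<beta> U}"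
proof -
  have "closed ((\<lambda>U :: 'n qmat. U $ i) -` (\<lambda>r. r $ j) -` {x. beta_scalar \<beta> x})" for i j
    by (intro closed_vimage_vec_nth closed_beta_scalar)
  then show ?thesis
    unfolding beta_orth_def
    by (intro closed_Collect_conj closed_Collect_all closed_Collect_eq continuous_intros) simp_all
qed

text \<open>Both \<open>\<mu> A\<close> and \<open>\<nu> A\<close> equal the double integral of the indicator of \<open>h g \<in> A\<close>, taken
  in the two orders.\<close>

lemma invariant_prob_measures_eq:
  fixes \<mu> \<nu> :: "'n::finite qmat measure"
  assumes \<mu>: "prob_space \<mu>" "sets \<mu> = sets borel" and \<nu>: "prob_space \<nu>" "sets \<nu> = sets borel"
    and G\<mu>: "AE g in \<mu>. G g" and G\<nu>: "AE h in \<nu>. G h"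
    and left: "\<And>h. G h \<Longrightarrow> distr \<mu> borel (qmm h) = \<mu>"
    and right: "\<And>g. G g \<Longrightarrow> distr \<nu> borel (\<lambda>h. qmm h g) = \<nu>"
  shows "\<nu> = \<mu>"
proof (rule measure_eqI)
  show "sets \<nu> = sets \<mu>" using \<mu> \<nu> by simp
  fix A assume "A \<in> sets \<nu>"
  then have A [measurable]: "A \<in> sets borel" using \<nu> by simp
  interpret mu: prob_space \<mu> by (rule \<mu>)
  interpret nu: prob_space \<nu> by (rule \<nu>)
  interpret pair_sigma_finite \<nu> \<mu> ..
  have [measurable_cong]: "sets \<mu> = sets borel" "sets \<nu> = sets borel" using \<mu> \<nu> by simp_all
  have [measurable]: "qmm h \<in> borel_measurable \<mu>" "(\<lambda>h. qmm h g) \<in> borel_measurable \<nu>" for h g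
    unfolding measurable_cong_sets[OF \<mu>(2) refl] measurable_cong_sets[OF \<nu>(2) refl]
    by (rule measurable_qmm_left measurable_qmm_right)+
  let ?F = "\<lambda>h g. indicator A (qmm h g) :: ennreal"
  have F: "case_prod ?F \<in> borel_measurable (\<nu> \<Otimes>\<^sub>M \<mu>)" by measurable
  have "(\<integral>\<^sup>+ g. ?F h g \<partial>\<mu>) = emeasure \<mu> A" if "G h" for h
  proof -
    have "(\<integral>\<^sup>+ g. ?F h g \<partial>\<mu>) = (\<integral>\<^sup>+ x. indicator A x \<partial>distr \<mu> borel (qmm h))"
      by (subst nn_integral_distr) auto
    then show ?thesis using left[OF that] by simp
  qed
  then have "(\<integral>\<^sup>+ h. (\<integral>\<^sup>+ g. ?F h g \<partial>\<mu>) \<partial>\<nu>) = (\<integral>\<^sup>+ h. emeasure \<mu> A \<partial>\<nu>)"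
    using G\<nu> by (intro nn_integral_cong_AE) (auto elim: AE_mp)
  then have left_first: "(\<integral>\<^sup>+ h. (\<integral>\<^sup>+ g. ?F h g \<partial>\<mu>) \<partial>\<nu>) = emeasure \<mu> A"
    by (simp add: nu.emeasure_space_1)
  have "(\<integral>\<^sup>+ h. ?F h g \<partial>\<nu>) = emeasure \<nu> A" if "G g" for g
  proof -
    have "(\<integral>\<^sup>+ h. ?F h g \<partial>\<nu>) = (\<integral>\<^sup>+ x. indicator A x \<partial>distr \<nu> borel (\<lambda>h. qmm h g))"
      by (subst nn_integral_distr) auto
    then show ?thesis using right[OF that] by simp
  qed
  then have "(\<integral>\<^sup>+ g. (\<integral>\<^sup>+ h. ?F h g \<partial>\<nu>) \<partial>\<mu>) = (\<integral>\<^sup>+ g. emeasure \<nu> A \<partial>\<mu>)"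
    using G\<mu> by (intro nn_integral_cong_AE) (auto elim: AE_mp)
  then have right_first: "(\<integral>\<^sup>+ g. (\<integral>\<^sup>+ h. ?F h g \<partial>\<nu>) \<partial>\<mu>) = emeasure \<nu> A"
    by (simp add: mu.emeasure_space_1)
  show "emeasure \<nu> A = emeasure \<mu> A"
    using Fubini'[OF F] left_first right_first by simp
qed

lemma givens_rows_normsq_mult:
  assumes "a \<noteq> b"
  shows "qnormsq (qmm (givens a b) X $ a $ i) * qnormsq (qmm (givens a b) X $ b $ i)
       = (qnormsq (X $ a $ i + X $ b $ i) * qnormsq (X $ b $ i - X $ a $ i)) / 4"
proof -
  have "(1 / sqrt 2)^2 = (1/2::real)" by (simp add: power2_eq_square inverse_sqrt2_mult_self)
  then show ?thesis
    by (simp only: givens_qmm_row_a[OF assms] givens_qmm_row_b[OF assms] qnormsq_scaleR)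
qed

context
  fixes M :: "'w measure" and \<beta> :: nat and Q :: "'w \<Rightarrow> 'n::finite qmat"
  assumes ps: "prob_space M" and haar: "beta_haar \<beta> M Q"
begin

interpretation prob_space M by (rule ps)

lemma haar_measurable [measurable]: "Q \<in> borel_measurable M"
  using haar by (simp add: beta_haar_def)

lemma haar_AE_beta_orth: "AE \<omega> in M. beta_orth \<beta> (Q \<omega>)"
  using haar by (simp add: beta_haar_def)

lemma haar_left_invariant: "beta_orth \<beta> V \<Longrightarrow> distr M borel (\<lambda>\<omega>. qmm V (Q \<omega>)) = distr M borel Q"
  using haar by (simp add: beta_haar_def)

lemma haar_adj_right_invariant:
  assumes V: "beta_orth \<beta> V"
  shows "distr M borel (\<lambda>\<omega>. qmm (qadj (Q \<omega>)) V) = distr M borel (\<lambda>\<omega>. qadj (Q \<omega>))"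
proof -
  have "distr M borel (\<lambda>\<omega>. qmm (qadj (Q \<omega>)) V) = distr (distr M borel (\<lambda>\<omega>. qmm (qadj V) (Q \<omega>))) borel qadj"
    by (subst distr_distr) (auto simp: comp_def qadj_qmm)
  also have "\<dots> = distr (distr M borel Q) borel qadj"
    using haar_left_invariant[OF beta_orth_qadj[OF V]] by simp
  also have "\<dots> = distr M borel (\<lambda>\<omega>. qadj (Q \<omega>))"
    by (subst distr_distr) (auto simp: comp_def)
  finally show ?thesis .
qed

lemma haar_adj_distr: "distr M borel (\<lambda>\<omega>. qadj (Q \<omega>)) = distr M borel Q"
proof (rule invariant_prob_measures_eq[where G = "beta_orth \<beta>"])
  have [measurable]: "Measurable.pred borel (beta_orth \<beta> :: 'n qmat \<Rightarrow> bool)"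
    using borel_closed[OF closed_beta_orth] by (simp add: pred_def)
  show "AE g in distr M borel Q. beta_orth \<beta> g"
    using haar_AE_beta_orth by (simp add: AE_distr_iff)
  show "AE h in distr M borel (\<lambda>\<omega>. qadj (Q \<omega>)). beta_orth \<beta> h"
    using haar_AE_beta_orth by (auto simp: AE_distr_iff beta_orth_qadj elim: AE_mp)
  show "distr (distr M borel Q) borel (qmm h) = distr M borel Q" if "beta_orth \<beta> h" for h
    using haar_left_invariant[OF that] by (simp add: distr_distr comp_def)
  show "distr (distr M borel (\<lambda>\<omega>. qadj (Q \<omega>))) borel (\<lambda>h. qmm h g) = distr M borel (\<lambda>\<omega>. qadj (Q \<omega>))"
    if "beta_orth \<beta> g" for g
    using haar_adj_right_invariant[OF that] by (simp add: distr_distr comp_def)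
qed (auto intro: prob_space_distr)

lemma haar_right_invariant:
  assumes V: "beta_orth \<beta> V"
  shows "distr M borel (\<lambda>\<omega>. qmm (Q \<omega>) V) = distr M borel Q"
proof -
  have "distr M borel (\<lambda>\<omega>. qmm (Q \<omega>) V)
      = distr (distr (distr M borel (\<lambda>\<omega>. qadj (Q \<omega>))) borel (qmm (qadj V))) borel qadj"
    by (simp add: distr_distr comp_def qadj_qmm)
  also have "\<dots> = distr (distr M borel (\<lambda>\<omega>. qmm (qadj V) (Q \<omega>))) borel qadj"
    by (simp only: haar_adj_distr) (simp add: distr_distr comp_def)
  also have "\<dots> = distr M borel (\<lambda>\<omega>. qadj (Q \<omega>))"
    using haar_left_invariant[OF beta_orth_qadj[OF V]] by (simp add: distr_distr comp_def)
  finally show ?thesis by (simp only: haar_adj_distr)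
qed

lemma haar_perm_invariant: "perm_invariant M Q"
  unfolding perm_invariant_def
proof (intro allI impI)
  fix \<sigma> \<tau> :: "'n \<Rightarrow> 'n" assume s: "\<sigma> permutes UNIV" and t: "\<tau> permutes UNIV"
  have "distr M borel (\<lambda>\<omega>. qmm (perm_qmat \<sigma>) (qmm (Q \<omega>) (perm_qmat \<tau>)))
      = distr (distr M borel (\<lambda>\<omega>. qmm (Q \<omega>) (perm_qmat \<tau>))) borel (qmm (perm_qmat \<sigma>))"
    by (simp add: distr_distr comp_def)
  also have "\<dots> = distr M borel (\<lambda>\<omega>. qmm (perm_qmat \<sigma>) (Q \<omega>))"
    using haar_right_invariant[OF perm_beta_orth[OF t]] by (simp add: distr_distr comp_def)
  finally show "distr M borel (\<lambda>\<omega>. qmm (perm_qmat \<sigma>) (qmm (Q \<omega>) (perm_qmat \<tau>))) = distr M borel Q"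
    using haar_left_invariant[OF perm_beta_orth[OF s]] by simp
qed

lemma haar_perm_exch: "perm_exch M Q"
  by (rule perm_exch_of_perm_invariant[OF haar_measurable haar_perm_invariant])

lemma haar_unitary: "AE \<omega> in M. unitary (Q \<omega>)"
  by (rule beta_orth_AE_unitary[OF haar_AE_beta_orth])

lemma haar_left_integral:
  fixes f :: "'n qmat \<Rightarrow> real"
  assumes V: "beta_orth \<beta> V" and f: "continuous_on UNIV f"
  shows "(\<integral>\<omega>. f (qmm V (Q \<omega>)) \<partial>M) = (\<integral>\<omega>. f (Q \<omega>) \<partial>M)"
proof -
  have [measurable]: "f \<in> borel_measurable borel" by (rule borel_measurable_continuous_onI[OF f])
  have "(\<integral>\<omega>. f (qmm V (Q \<omega>)) \<partial>M) = integral\<^sup>L (distr M borel (\<lambda>\<omega>. qmm V (Q \<omega>))) f"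
    by (rule integral_distr[symmetric]) auto
  also have "\<dots> = (\<integral>\<omega>. f (Q \<omega>) \<partial>M)"
    unfolding haar_left_invariant[OF V] by (rule integral_distr) auto
  finally show ?thesis .
qed

text \<open>If \<open>E |q|\<^sup>4 = 1/m\<close> then, by the column relation, two entries of a column are almost surely
  never both nonzero. Rotating these two rows by \<open>\<pi>/4\<close> does not change the law of \<open>Q\<close>, yet
  turns such a pair into one with \<open>E |x|\<^sup>2 |y|\<^sup>2 = 1/(2m)\<close>.\<close>

lemma haar_entry_sq_moment_ne:
  assumes card2: "CARD('n) \<ge> 2"
  shows "(\<integral>\<omega>. (qnormsq (Q \<omega> $ k $ i))^2 \<partial>M) \<noteq> 1 / real CARD('n)"
proof
  interpret R: perm_exch_unitary M Q
    by (unfold_locales) (auto simp: ps haar_unitary haar_perm_exch card2)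
  assume w: "(\<integral>\<omega>. (qnormsq (Q \<omega> $ k $ i))^2 \<partial>M) = 1 / real CARD('n)"
  obtain a b :: 'n where ab: "a \<noteq> b"
    using card2 card_le_Suc0_iff_eq[of "UNIV :: 'n set"] by fastforce
  have wa: "(\<integral>\<omega>. (qnormsq (Q \<omega> $ a $ i))^2 \<partial>M) = 1 / R.m"
   and wb: "(\<integral>\<omega>. (qnormsq (Q \<omega> $ b $ i))^2 \<partial>M) = 1 / R.m"
    using w R.entry_sq_moment_eq[of _ i k i] by (simp_all add: R.m_def)
  have "(R.m - 1) * (\<integral>\<omega>. qnormsq (Q \<omega> $ a $ i) * qnormsq (Q \<omega> $ b $ i) \<partial>M) = 0"
    using R.col_moment_relation[OF ab, of i] wa by simp
  then have v0: "(\<integral>\<omega>. qnormsq (Q \<omega> $ a $ i) * qnormsq (Q \<omega> $ b $ i) \<partial>M) = 0"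
    using R.m_ge_2 by simp
  then have "AE \<omega> in M. qnormsq (Q \<omega> $ a $ i) * qnormsq (Q \<omega> $ b $ i) = 0"
    using integral_nonneg_eq_0_iff_AE[OF R.integrable_entry_normsq_mult, of a i b i]
    by (simp add: qnormsq_nonneg)
  then have "AE \<omega> in M. qnormsq (qmm (givens a b) (Q \<omega>) $ a $ i) * qnormsq (qmm (givens a b) (Q \<omega>) $ b $ i)
       = ((qnormsq (Q \<omega> $ a $ i))^2 + (qnormsq (Q \<omega> $ b $ i))^2) / 4"
    by eventually_elim (unfold givens_rows_normsq_mult[OF ab], auto simp: qnormsq_eq0 power2_eq_square)
  then have "(\<integral>\<omega>. qnormsq (qmm (givens a b) (Q \<omega>) $ a $ i) * qnormsq (qmm (givens a b) (Q \<omega>) $ b $ i) \<partial>M)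
      = (\<integral>\<omega>. ((qnormsq (Q \<omega> $ a $ i))^2 + (qnormsq (Q \<omega> $ b $ i))^2) / 4 \<partial>M)"
    by (intro integral_cong_AE) (auto intro!: measurable_continuous_comp[OF _ haar_measurable] continuous_intros)
  also have "\<dots> = 1 / (2 * R.m)"
    using wa wb by (simp add: R.integrable_entry_normsq_sq)
  finally have "1 / (2 * R.m) = 0"
    using haar_left_integral[OF givens_beta_orth[OF ab], of "\<lambda>X. qnormsq (X $ a $ i) * qnormsq (X $ b $ i)"] v0
    by (simp add: continuous_intros)
  then show False using R.m_ge_2 by simp
qed

end

lemma moment_mixture_weight:
  fixes m4 m4c m4f a K m ws wc wf :: real
  assumes K: "K \<noteq> 0" and wf: "1 - m * wf \<noteq> 0"
    and m4: "m4 = a + 2 * m * ws * K" and m4c: "m4c = a + 2 * m * wc * K" and m4f: "m4f = a + 2 * m * wf * K"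
    and wc: "m * wc = 1"
  shows "m4c \<noteq> m4f"
    and "let p = (1 - m * ws) / (1 - m * wf) in m4 = p * m4f + (1 - p) * m4c \<and> p = (m4c - m4) / (m4c - m4f)"
proof -
  have cf: "m4c - m4f = 2 * K * (1 - m * wf)" and c: "m4c - m4 = 2 * K * (1 - m * ws)"
    using m4 m4c m4f wc by (simp_all add: algebra_simps)
  have "m4c - m4f \<noteq> 0" unfolding cf using K wf by simp
  then show "m4c \<noteq> m4f" by simp
  have p: "(1 - m * ws) / (1 - m * wf) = (m4c - m4) / (m4c - m4f)"
    using K unfolding cf c by simp
  have affine: "m4 = x * m4f + (1 - x) * m4c" if "x * (m4c - m4f) = m4c - m4" for x
    using that by (simp add: algebra_simps)
  have "m4 = (m4c - m4) / (m4c - m4f) * m4f + (1 - (m4c - m4) / (m4c - m4f)) * m4c"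
    using \<open>m4c \<noteq> m4f\<close> by (intro affine) simp
  with p show "let p = (1 - m * ws) / (1 - m * wf) in m4 = p * m4f + (1 - p) * m4c \<and> p = (m4c - m4) / (m4c - m4f)"
    by simp
qed

theorem mainTheorem6:
  fixes M :: "'w measure"
    and \<beta> :: nat
    and L1 L2 :: "'w \<Rightarrow> real^'n::finite"
    and Qs Pm Q :: "'w \<Rightarrow> 'n qmat"
  assumes "prob_space M"
    and "\<beta> \<in> {1, 2, 4}"
    and "CARD('n) \<ge> 2"
    and "L1 \<in> borel_measurable M" and "L2 \<in> borel_measurable M"
    and "\<And>i. integrable M (\<lambda>\<omega>. (L1 \<omega> $ i)^4)"
    and "\<And>i. integrable M (\<lambda>\<omega>. (L2 \<omega> $ i)^4)"
    and "indep_rv M L1 L2"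
    and "Qs \<in> borel_measurable M"
    and "AE \<omega> in M. beta_orth \<beta> (Qs \<omega>)"
    and "perm_invariant M Qs"
    and "unif_perm M Pm"
    and "beta_haar \<beta> M Q"
    and "indep_rv M (\<lambda>\<omega>. (L1 \<omega>, L2 \<omega>)) Qs"
    and "indep_rv M (\<lambda>\<omega>. (L1 \<omega>, L2 \<omega>)) Pm"
    and "indep_rv M (\<lambda>\<omega>. (L1 \<omega>, L2 \<omega>)) Q"
    and "(\<integral>\<omega>. kappa2 (L1 \<omega>) * kappa2 (L2 \<omega>) \<partial>M) \<noteq> 0"
  shows
    "let m = real CARD('n);
         m4  = phi M (\<lambda>\<omega>. qpow4 (qdiag (L1 \<omega>) + qmm (qadj (Qs \<omega>)) (qmm (qdiag (L2 \<omega>)) (Qs \<omega>))));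
         m4c = phi M (\<lambda>\<omega>. qpow4 (qdiag (L1 \<omega>) + qmm (qadj (Pm \<omega>)) (qmm (qdiag (L2 \<omega>)) (Pm \<omega>))));
         m4f = phi M (\<lambda>\<omega>. qpow4 (qdiag (L1 \<omega>) + qmm (qadj (Q \<omega>)) (qmm (qdiag (L2 \<omega>)) (Q \<omega>))))
     in m4c \<noteq> m4f \<and>
        (\<forall>i j k l.
           let p = (1 - m * (\<integral>\<omega>. (qnormsq (Qs \<omega> $ i $ j))^2 \<partial>M))
                 / (1 - m * (\<integral>\<omega>. (qnormsq (Q \<omega> $ k $ l))^2 \<partial>M))
           in m4 = p * m4f + (1 - p) * m4c \<and> p = (m4c - m4) / (m4c - m4f))"
proof -
  note ps = assms(1) and card2 = assms(3) and L = assms(4-7) and up = assms(12) and haar = assms(13)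
  interpret S: conj_model M Qs L1 L2
    by (intro conj_model.intro perm_exch_unitary.intro conj_model_axioms.intro ps card2 L assms(9,14)
        perm_exch_of_perm_invariant[OF assms(9,11)] beta_orth_AE_unitary[OF assms(10)])
  interpret P: conj_model M Pm L1 L2
    by (intro conj_model.intro perm_exch_unitary.intro conj_model_axioms.intro ps card2 L assms(15)
        unif_perm_measurable[OF ps up] unif_perm_unitary[OF ps up] unif_perm_exch[OF ps up])
  interpret F: conj_model M Q L1 L2
    by (intro conj_model.intro perm_exch_unitary.intro conj_model_axioms.intro ps card2 L assms(16)
        haar_measurable[OF ps haar] haar_unitary[OF ps haar] haar_perm_exch[OF ps haar])
  obtain n0 :: 'n where True by blast
  have wf: "1 - F.m * (\<integral>\<omega>. (qnormsq (Q \<omega> $ k $ l))^2 \<partial>M) \<noteq> 0" for k l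
    using haar_entry_sq_moment_ne[OF ps haar card2, of k l] F.m_ge_2 by (auto simp: F.m_def field_simps)
  have wc: "F.m * (\<integral>\<omega>. (qnormsq (Pm \<omega> $ n0 $ n0))^2 \<partial>M) = 1"
    using unif_perm_entry_normsq_sq[OF ps up] P.expectation_entry_normsq P.m_ge_2 by simp
  note mixture = moment_mixture_weight[OF assms(17) wf S.phi_pow4_conj P.phi_pow4_conj F.phi_pow4_conj wc]
  show ?thesis
    unfolding F.m_def[symmetric] Let_def
    using mixture(1) mixture(2)[unfolded Let_def] by blast
qed

end
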